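(* Let $\Phi$ be a real, additive gain graph on $n$ vertices and $Q_1,\dots,Q_n\in\mathbb{E}^d$. (i) Ideal general position implies simple position. (ii) General position with respect to $\Phi$ and projective general position with respect to $\Phi$ are equivalent. (iii) Completely general position with respect to $\Phi$ (ideal general position together with general position with respect to $\Phi$) and projective completely general position with respect to $\Phi$ (ideal general position together with projective general position with respect to $\Phi$) are equivalent. (iv) If $\Phi$ is complete, general position with respect to $\Phi$ implies ideal general position; this implication does not hold in general when $\Phi$ is disconnected or separable.
   Context: A real, additive gain graph $\Phi$ on $V=\{1,\dots,n\}$: finite graph with edge set $E$ (multiple edges allowed, every edge with two distinct endpoints) and gains $\phi(e;i,j)\in\mathbb{R}$ with $\phi(e;j,i)=-\phi(e;i,j)$. It is complete if every two vertices are adjacent, separable if some vertex $v$ has $\Phi\setminus v$ disconnected. $S\subseteq E$ is balanced if every circle in $S$ has gain sum $0$; $c(S)$ counts components of $(V,S)$, isolated vertices included. With $\psi_{ij}(P)=d(P,Q_i)^2-d(P,Q_j)^2$, $\mathcal{H}=\mathcal{H}(\Phi;\mathbf{Q})$ consists of hyperplanes $h(e)=\{P:\psi_{ij}(P)=\phi(e;i,j)\}$ for edges $e$ with endpoints $i,j$. $\mathcal{L}(\mathcal{H})$: nonempty intersections of subsets of $\mathcal{H}$ (including $\mathbb{E}^d$) ordered by reverse inclusion; $E(s)=\{e:h(e)\supseteq s\}$. Simple position: every subset of at most $d+1$ of the $Q_i$ is affinely independent. Ideal general position: the points are distinct and, with $\mathbb{E}^d\subset\mathbb{P}^d$, $h_\infty$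 the ideal hyperplane and $p_{ij}$ the ideal point of line $Q_iQ_j$, for every set $T$ of unordered pairs the projective span of $\{p_{ij}:\{i,j\}\in T\}$ has dimension $\min(n-c(T),d)-1$, $c(T)$ the number of components of $(\{1,\dots,n\},T)$. Balanced flat: balanced $S\subseteq E$ such that every $e\notin S$ with both endpoints in one component of $(V,S)$ makes $S\cup\{e\}$ unbalanced; rank $n-c(S)$. General position w.r.t. $\Phi$: $s\mapsto E(s)$ is a poset isomorphism from $\mathcal{L}(\mathcal{H})$ onto the poset of balanced flats of rank $\le d$. Complete lift matroid $L_0(\Phi)$: ground set $E\cup\{e_0\}$, rank $r(S)=n-c(S\setminus\{e_0\})+\epsilon$ with $\epsilon=0$ if $S$ is a balanced subset of $E$, else $1$; $T_{d+1}(\mathrm{Lat}\,L_0(\Phi))$ is its lattice of flats with all flats of rank $\geq d+1$ replaced by a single top element. Projective general position w.r.t. $\Phi$: with $\mathcal{H}_{\mathbb{P}}=\{h(e)_{\mathbb{P}}\}\cup\{h_\infty\}$ (projective closures), the lattice of all intersections of subsets of $\mathcal{H}_{\mathbb{P}}$ in $\mathbb{P}^d$, ordered by reverse inclusion, is isomorphic to $T_{d+1}(\mathrm{Lat}\,L_0(\Phi))$ via $x\mapsto\{e:h(e)_{\mathbb{P}}\supseteq x\}\cup\{e_0:h_\infty\supseteq x\}$. *)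

theory Defs
  imports "HOL-Analysis.Analysis"
begin

text \<open>An edge e has a chosen orientation gends e = (i,j) and gain ggain e = phi(e;i,j);
  phi(e;j,i) = - ggain e.\<close>

record 'e gain_graph =
  gedges :: "'e set"
  gends  :: "'e \<Rightarrow> nat \<times> nat"
  ggain  :: "'e \<Rightarrow> real"

definition gain_graph :: "nat \<Rightarrow> 'e gain_graph \<Rightarrow> bool" where
  "gain_graph n G \<longleftrightarrow> finite (gedges G) \<and>
     (\<forall>e\<in>gedges G. fst (gends G e) \<in> {1..n} \<and> snd (gends G e) \<in> {1..n}
                    \<and> fst (gends G e) \<noteq> snd (gends G e))"

definition joins :: "'e gain_graph \<Rightarrow> 'e \<Rightarrow> nat \<Rightarrow> nat \<Rightarrow> bool" where
  "joins G e i j \<longleftrightarrow> gends G e = (i, j) \<or> gends G e = (j, i)"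

definition gain :: "'e gain_graph \<Rightarrow> 'e \<Rightarrow> nat \<Rightarrow> nat \<Rightarrow> real" where
  "gain G e i j = (if gends G e = (i, j) then ggain G e
                   else if gends G e = (j, i) then - ggain G e else 0)"

definition circle_in :: "'e gain_graph \<Rightarrow> 'e set \<Rightarrow> nat list \<Rightarrow> 'e list \<Rightarrow> bool" where
  "circle_in G S vs es \<longleftrightarrow> length vs = length es \<and> 2 \<le> length es \<and> distinct vs \<and> distinct es
     \<and> set es \<subseteq> S
     \<and> (\<forall>m<length es. joins G (es ! m) (vs ! m) (vs ! ((m + 1) mod length es)))"

definition circle_gain :: "'e gain_graph \<Rightarrow> nat list \<Rightarrow> 'e list \<Rightarrow> real" where
  "circle_gain G vs es =
     (\<Sum>m<length es. gain G (es ! m) (vs ! m) (vs ! ((m + 1) mod length es)))"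

definition balanced :: "'e gain_graph \<Rightarrow> 'e set \<Rightarrow> bool" where
  "balanced G S \<longleftrightarrow> S \<subseteq> gedges G \<and>
     (\<forall>vs es. circle_in G S vs es \<longrightarrow> circle_gain G vs es = 0)"

definition conn :: "nat set \<Rightarrow> (nat \<times> nat) set \<Rightarrow> nat \<Rightarrow> nat \<Rightarrow> bool" where
  "conn V R i j \<longleftrightarrow> (i, j) \<in> (Restr (R \<union> R\<inverse>) V)\<^sup>*"

definition ncomp :: "nat set \<Rightarrow> (nat \<times> nat) set \<Rightarrow> nat" where
  "ncomp V R = card ((\<lambda>v. {u \<in> V. conn V R v u}) ` V)"

definition ecomp :: "'e gain_graph \<Rightarrow> nat \<Rightarrow> 'e set \<Rightarrow> nat" where
  "ecomp G n S = ncomp {1..n} (gends G ` S)"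

definition balanced_flat :: "'e gain_graph \<Rightarrow> nat \<Rightarrow> 'e set \<Rightarrow> bool" where
  "balanced_flat G n S \<longleftrightarrow> balanced G S \<and>
     (\<forall>e \<in> gedges G - S.
        conn {1..n} (gends G ` S) (fst (gends G e)) (snd (gends G e))
        \<longrightarrow> \<not> balanced G (insert e S))"

definition complete_gg :: "nat \<Rightarrow> 'e gain_graph \<Rightarrow> bool" where
  "complete_gg n G \<longleftrightarrow> (\<forall>i\<in>{1..n}. \<forall>j\<in>{1..n}. i \<noteq> j \<longrightarrow> (\<exists>e\<in>gedges G. joins G e i j))"

definition disconnected_gg :: "nat \<Rightarrow> 'e gain_graph \<Rightarrow> bool" where
  "disconnected_gg n G \<longleftrightarrow> 2 \<le> ecomp G n (gedges G)"

definition connected_gg :: "nat \<Rightarrow> 'e gain_graph \<Rightarrow> bool" where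
  "connected_gg n G \<longleftrightarrow> ecomp G n (gedges G) = 1"

definition separable_gg :: "nat \<Rightarrow> 'e gain_graph \<Rightarrow> bool" where
  "separable_gg n G \<longleftrightarrow> (\<exists>v\<in>{1..n}.
     2 \<le> ncomp ({1..n} - {v})
            (gends G ` {e \<in> gedges G. \<not> (fst (gends G e) = v \<or> snd (gends G e) = v)}))"

definition psi :: "(nat \<Rightarrow> 'a::euclidean_space) \<Rightarrow> nat \<Rightarrow> nat \<Rightarrow> 'a \<Rightarrow> real" where
  "psi Q i j P = (dist P (Q i))\<^sup>2 - (dist P (Q j))\<^sup>2"

definition hyp :: "'e gain_graph \<Rightarrow> (nat \<Rightarrow> 'a::euclidean_space) \<Rightarrow> 'e \<Rightarrow> 'a set" where
  "hyp G Q e = {P. psi Q (fst (gends G e)) (snd (gends G e)) P = ggain G e}"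

definition arr_lattice :: "'e gain_graph \<Rightarrow> (nat \<Rightarrow> 'a::euclidean_space) \<Rightarrow> 'a set set" where
  "arr_lattice G Q = {\<Inter> (hyp G Q ` A) | A. A \<subseteq> gedges G \<and> \<Inter> (hyp G Q ` A) \<noteq> {}}"

definition Eof :: "'e gain_graph \<Rightarrow> (nat \<Rightarrow> 'a::euclidean_space) \<Rightarrow> 'a set \<Rightarrow> 'e set" where
  "Eof G Q s = {e \<in> gedges G. s \<subseteq> hyp G Q e}"

text \<open>General position w.r.t. Phi: s |-> E(s) is a poset isomorphism from L(H) (reverse inclusion)
  onto the balanced flats of rank n - c(S) <= d (inclusion).\<close>

definition general_position :: "'e gain_graph \<Rightarrow> nat \<Rightarrow> (nat \<Rightarrow> 'a::euclidean_space) \<Rightarrow> bool" where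
  "general_position G n Q \<longleftrightarrow>
     bij_betw (Eof G Q) (arr_lattice G Q)
       {S. balanced_flat G n S \<and> n - ecomp G n S \<le> DIM('a)} \<and>
     (\<forall>s\<in>arr_lattice G Q. \<forall>t\<in>arr_lattice G Q. t \<subseteq> s \<longleftrightarrow> Eof G Q s \<subseteq> Eof G Q t)"

definition simple_position :: "nat \<Rightarrow> (nat \<Rightarrow> 'a::euclidean_space) \<Rightarrow> bool" where
  "simple_position n Q \<longleftrightarrow>
     (\<forall>I \<subseteq> {1..n}. card I \<le> DIM('a) + 1 \<longrightarrow> inj_on Q I \<and> \<not> affine_dependent (Q ` I))"

text \<open>The ideal point p_ij is the direction of Q_j - Q_i; the projective span of a set of ideal
  points has projective dimension (linear dimension of the span of the directions) - 1.
  Unordered pairs {i,j} are encoded as (i,j) with i < j.\<close>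

definition ideal_general_position :: "nat \<Rightarrow> (nat \<Rightarrow> 'a::euclidean_space) \<Rightarrow> bool" where
  "ideal_general_position n Q \<longleftrightarrow> inj_on Q {1..n} \<and>
     (\<forall>T. T \<subseteq> {(i, j). i \<in> {1..n} \<and> j \<in> {1..n} \<and> i < j} \<longrightarrow>
        dim ((\<lambda>(i, j). Q j - Q i) ` T) = min (n - ncomp {1..n} T) DIM('a))"

text \<open>P^d is modelled by the linear subspaces of 'a \<times> real (a projective subspace is identified
  with the linear subspace of its homogeneous coordinates; E^d embeds as P |-> [P:1]).
  The projective closure of an affine set A is the projective span of A, i.e. span of the points (P,1).\<close>

definition hP :: "'e gain_graph \<Rightarrow> (nat \<Rightarrow> 'a::euclidean_space) \<Rightarrow> 'e \<Rightarrow> ('a \<times> real) set" where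
  "hP G Q e = span ((\<lambda>P. (P, 1::real)) ` hyp G Q e)"

definition h_inf :: "('a::euclidean_space \<times> real) set" where
  "h_inf = {x. snd x = 0}"

text \<open>Ground set of the complete lift matroid: None plays the role of e_0, Some e of e.\<close>

definition Hfam :: "'e gain_graph \<Rightarrow> (nat \<Rightarrow> 'a::euclidean_space) \<Rightarrow> 'e option \<Rightarrow> ('a \<times> real) set" where
  "Hfam G Q a = (case a of None \<Rightarrow> h_inf | Some e \<Rightarrow> hP G Q e)"

definition lift_ground :: "'e gain_graph \<Rightarrow> 'e option set" where
  "lift_ground G = insert None (Some ` gedges G)"

definition proj_lattice :: "'e gain_graph \<Rightarrow> (nat \<Rightarrow> 'a::euclidean_space) \<Rightarrow> ('a \<times> real) set set" where
  "proj_lattice G Q = {\<Inter> (Hfam G Q ` A) | A. A \<subseteq> lift_ground G}"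

definition Xof :: "'e gain_graph \<Rightarrow> (nat \<Rightarrow> 'a::euclidean_space) \<Rightarrow> ('a \<times> real) set \<Rightarrow> 'e option set" where
  "Xof G Q x = {a \<in> lift_ground G. x \<subseteq> Hfam G Q a}"

definition lift_rank :: "'e gain_graph \<Rightarrow> nat \<Rightarrow> 'e option set \<Rightarrow> nat" where
  "lift_rank G n S = n - ecomp G n {e. Some e \<in> S}
     + (if None \<notin> S \<and> balanced G {e. Some e \<in> S} then 0 else 1)"

definition lift_flat :: "'e gain_graph \<Rightarrow> nat \<Rightarrow> 'e option set \<Rightarrow> bool" where
  "lift_flat G n F \<longleftrightarrow> F \<subseteq> lift_ground G \<and>
     (\<forall>x \<in> lift_ground G - F. lift_rank G n F < lift_rank G n (insert x F))"

text \<open>T_{d+1}(Lat L_0): flats of rank <= d, plus one top element (represented by the ground set,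
  which is the top flat), standing for all flats of rank >= d+1.\<close>

definition trunc_lattice :: "'e gain_graph \<Rightarrow> nat \<Rightarrow> nat \<Rightarrow> 'e option set set" where
  "trunc_lattice G n d = {F. lift_flat G n F \<and> lift_rank G n F \<le> d} \<union> {lift_ground G}"

definition proj_general_position :: "'e gain_graph \<Rightarrow> nat \<Rightarrow> (nat \<Rightarrow> 'a::euclidean_space) \<Rightarrow> bool" where
  "proj_general_position G n Q \<longleftrightarrow>
     bij_betw (Xof G Q) (proj_lattice G Q) (trunc_lattice G n DIM('a)) \<and>
     (\<forall>x\<in>proj_lattice G Q. \<forall>y\<in>proj_lattice G Q. y \<subseteq> x \<longleftrightarrow> Xof G Q x \<subseteq> Xof G Q y)"

definition completely_general_position :: "'e gain_graph \<Rightarrow> nat \<Rightarrow> (nat \<Rightarrow> 'a::euclidean_space) \<Rightarrow> bool" where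
  "completely_general_position G n Q \<longleftrightarrow> ideal_general_position n Q \<and> general_position G n Q"

definition proj_completely_general_position :: "'e gain_graph \<Rightarrow> nat \<Rightarrow> (nat \<Rightarrow> 'a::euclidean_space) \<Rightarrow> bool" where
  "proj_completely_general_position G n Q \<longleftrightarrow> ideal_general_position n Q \<and> proj_general_position G n Q"

end

theory Submission
  imports Defs
begin

text \<open>Each hyperplane of the arrangement is h(e) = {P. (Q j - Q i) \<bullet> P = c e}, since
  psi i j is affine in P. General position then says that the normals Q j - Q i realize the
  graphic matroid of the gain graph truncated at rank d; statements (i) and (iv) are statements
  about spans of such differences. For (ii) one homogenizes: the closure of a nonempty affine
  intersection is the cone of its homogeneous coordinates, and meeting it with the ideal
  hyperplane leaves the cone spanned by the directions orthogonal to the normals. Projective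
  intersections of the first kind carry exactly the affine balanced flats, those at infinity
  carry e0 together with the closed sets of the graphic matroid, which are the flats of the lift
  matroid. The counterexamples in (iv) are an edgeless graph on two coinciding points and a path
  whose two end points coincide.\<close>

section \<open>Connectivity and components\<close>

lemma conn_refl [simp]: "conn V R i i"
  by (simp add: conn_def)

lemma conn_sym: "conn V R i j \<Longrightarrow> conn V R j i"
proof -
  have "sym ((Restr (R \<union> R\<inverse>) V)\<^sup>*)" by (rule sym_rtrancl) (auto simp: sym_def)
  then show "conn V R i j \<Longrightarrow> conn V R j i" unfolding conn_def by (auto dest: symD)
qed

lemma conn_trans: "conn V R i j \<Longrightarrow> conn V R j k \<Longrightarrow> conn V R i k"
  unfolding conn_def by (rule rtrancl_trans)

lemma conn_edge: "(a, b) \<in> R \<Longrightarrow> a \<in> V \<Longrightarrow> b \<in> V \<Longrightarrow> conn V R a b"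
  unfolding conn_def by auto

lemma conn_mono: "R \<subseteq> R' \<Longrightarrow> conn V R i j \<Longrightarrow> conn V R' i j"
  unfolding conn_def by (rule rtrancl_mono[THEN subsetD]) auto

lemma conn_empty: "conn V {} i j \<longleftrightarrow> i = j"
  unfolding conn_def by auto

lemma conn_subsumed:
  assumes "\<And>a b. (a, b) \<in> R' \<Longrightarrow> a \<in> V \<Longrightarrow> b \<in> V \<Longrightarrow> conn V R a b"
  shows "conn V R' i j \<Longrightarrow> conn V R i j"
  unfolding conn_def[of V R' i j]
proof (induction rule: rtrancl_induct)
  case (step y z)
  then have "conn V R y z" using assms conn_sym by auto
  with step show ?case using conn_trans by blast
qed simp

lemma conn_eqI:
  assumes "R \<subseteq> R'" "\<And>a b. (a, b) \<in> R' \<Longrightarrow> a \<in> V \<Longrightarrow> b \<in> V \<Longrightarrow> conn V R a b"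
  shows "conn V R' = conn V R"
  using conn_subsumed[OF assms(2)] conn_mono[OF assms(1)] by (intro ext) blast

lemma conn_last_step:
  assumes "conn V R i j" "i \<noteq> j"
  shows "j \<in> fst ` R \<union> snd ` R"
  using assms unfolding conn_def by (cases rule: rtranclE) (auto intro: rev_image_eqI)

lemma conn_insert:
  "conn V (insert (a, b) R) i j \<longleftrightarrow> conn V R i j \<or> (a \<in> V \<and> b \<in> V \<and>
     ((conn V R i a \<and> conn V R b j) \<or> (conn V R i b \<and> conn V R a j)))"
  (is "?L \<longleftrightarrow> ?R j")
proof
  assume ?L
  then show "?R j" unfolding conn_def[of V "insert (a, b) R" i j]
  proof (induction rule: rtrancl_induct)
    case (step y z)
    show ?case
    proof (cases "(y, z) \<in> R \<union> R\<inverse> \<and> y \<in> V \<and> z \<in> V")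
      case True
      then have "conn V R y z" unfolding conn_def by auto
      with step.IH show ?thesis using conn_trans by blast
    next
      case False
      with step.hyps(2) have ab: "(y, z) = (a, b) \<or> (y, z) = (b, a)" "a \<in> V" "b \<in> V" by auto
      show ?thesis
      proof (cases "conn V R i y")
        case True
        with ab show ?thesis by auto
      next
        case False
        with step.IH have "(conn V R i a \<and> conn V R b y) \<or> (conn V R i b \<and> conn V R a y)" by auto
        with ab show ?thesis by (metis conn_sym conn_trans prod.inject)
      qed
    qed
  qed simp
next
  assume "?R j"
  moreover have "a \<in> V \<Longrightarrow> b \<in> V \<Longrightarrow> conn V (insert (a, b) R) a b" by (rule conn_edge) auto
  moreover note conn_mono[of R "insert (a, b) R", OF subset_insertI]
  ultimately show ?L by (smt (verit, ccfv_SIG) conn_sym conn_trans)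
qed

lemma conn_insert_same:
  assumes "conn V R a b"
  shows "conn V (insert (a, b) R) = conn V R"
  by (rule conn_eqI) (use assms in \<open>auto intro: conn_edge\<close>)

lemma conn_insert_cong:
  assumes "conn V R = conn V R'"
  shows "conn V (insert p R) = conn V (insert p R')"
proof -
  obtain a b where p: "p = (a, b)" by force
  show ?thesis unfolding p by (intro ext) (simp add: conn_insert assms)
qed

definition vcomp :: "nat set \<Rightarrow> (nat \<times> nat) set \<Rightarrow> nat \<Rightarrow> nat set" where
  "vcomp V R v = {u \<in> V. conn V R v u}"

lemma ncomp_eq_card_vcomp: "ncomp V R = card (vcomp V R ` V)"
  unfolding ncomp_def vcomp_def by simp

lemma vcomp_eq: "conn V R v w \<Longrightarrow> vcomp V R v = vcomp V R w"
  unfolding vcomp_def using conn_trans conn_sym by blast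

lemma ncomp_le_card: "finite V \<Longrightarrow> ncomp V R \<le> card V"
  unfolding ncomp_def by (rule card_image_le)

lemma ncomp_cong: "conn V R = conn V R' \<Longrightarrow> ncomp V R = ncomp V R'"
  unfolding ncomp_def by simp

lemma ncomp_empty: "ncomp V {} = card V"
proof -
  have "(\<lambda>v. {u \<in> V. conn V {} v u}) ` V = (\<lambda>v. {v}) ` V"
    by (auto simp: conn_empty)
  moreover have "card ((\<lambda>v. {v}) ` V) = card V" by (rule card_image) (auto simp: inj_on_def)
  ultimately show ?thesis unfolding ncomp_def by simp
qed

lemma ncomp_eq_1:
  assumes "V \<noteq> {}" "\<And>u v. u \<in> V \<Longrightarrow> v \<in> V \<Longrightarrow> conn V R u v"
  shows "ncomp V R = 1"
proof -
  have "(\<lambda>v. {u \<in> V. conn V R v u}) ` V = {V}" using assms by auto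
  then show ?thesis unfolding ncomp_def by simp
qed

lemma ncomp_ge_2:
  assumes "finite V" "u \<in> V" "v \<in> V" "\<not> conn V R u v"
  shows "2 \<le> ncomp V R"
proof -
  have "v \<in> vcomp V R v" "v \<notin> vcomp V R u" using assms unfolding vcomp_def by auto
  then have ne: "vcomp V R u \<noteq> vcomp V R v" by blast
  have "card {vcomp V R u, vcomp V R v} \<le> card (vcomp V R ` V)"
    by (rule card_mono) (use assms in auto)
  then show ?thesis unfolding ncomp_eq_card_vcomp using ne by simp
qed

lemma ncomp_insert_conn: "conn V R a b \<Longrightarrow> ncomp V (insert (a, b) R) = ncomp V R"
  by (rule ncomp_cong) (rule conn_insert_same)

lemma vcomp_insert_nconn:
  assumes "a \<in> V" "b \<in> V" "v \<in> V"
  shows "vcomp V (insert (a, b) R) v =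
    (if v \<in> vcomp V R a \<union> vcomp V R b then vcomp V R a \<union> vcomp V R b else vcomp V R v)"
proof (cases "v \<in> vcomp V R a \<union> vcomp V R b")
  case True
  then have "conn V R v a \<or> conn V R v b" unfolding vcomp_def using conn_sym by blast
  then have "conn V (insert (a, b) R) v u \<longleftrightarrow> conn V R a u \<or> conn V R b u" for u
    unfolding conn_insert using assms conn_trans[of V R] conn_sym[of V R] by meson
  with True show ?thesis unfolding vcomp_def by auto
next
  case False
  then have "\<not> conn V R v a" "\<not> conn V R v b" using assms conn_sym unfolding vcomp_def by blast+
  with False show ?thesis unfolding vcomp_def conn_insert by auto
qed

lemma vcomp_image_insert_nconn:
  assumes "a \<in> V" "b \<in> V"
  shows "vcomp V (insert (a, b) R) ` V =
    insert (vcomp V R a \<union> vcomp V R b) (vcomp V R ` V - {vcomp V R a, vcomp V R b})"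
    (is "?C' ` V = insert (?C a \<union> ?C b) ?rest")
proof (intro set_eqI iffI)
  fix X assume "X \<in> ?C' ` V"
  then show "X \<in> insert (?C a \<union> ?C b) ?rest"
    using vcomp_insert_nconn[where R = R, OF assms] unfolding vcomp_def by auto
next
  fix X assume X: "X \<in> insert (?C a \<union> ?C b) ?rest"
  show "X \<in> ?C' ` V"
  proof (cases "X = ?C a \<union> ?C b")
    case True
    have "a \<in> ?C a" using assms unfolding vcomp_def by simp
    then show ?thesis using True vcomp_insert_nconn[where R = R, OF assms assms(1)] assms(1)
      by (metis Un_iff image_eqI)
  next
    case False
    then obtain v where v: "v \<in> V" "X = ?C v" "?C v \<noteq> ?C a" "?C v \<noteq> ?C b" using X by auto
    then have "v \<notin> ?C a \<union> ?C b" using vcomp_eq unfolding vcomp_def by blast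
    then show ?thesis using vcomp_insert_nconn[where R = R, OF assms v(1)] v by auto
  qed
qed

lemma ncomp_insert_nconn:
  assumes "finite V" "a \<in> V" "b \<in> V" "\<not> conn V R a b"
  shows "ncomp V (insert (a, b) R) + 1 = ncomp V R"
proof -
  let ?C = "vcomp V R"
  let ?rest = "?C ` V - {?C a, ?C b}"
  have aCa: "a \<in> ?C a" and "b \<in> ?C b" "b \<notin> ?C a"
    using assms unfolding vcomp_def by auto
  then have ne: "?C a \<noteq> ?C b" by blast
  have notin: "?C a \<union> ?C b \<notin> ?rest"
  proof
    assume "?C a \<union> ?C b \<in> ?rest"
    then obtain v where v: "v \<in> V" "?C v = ?C a \<union> ?C b" "?C v \<noteq> ?C a" by auto
    then have "conn V R v a" using aCa unfolding vcomp_def by blast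
    then show False using vcomp_eq v by blast
  qed
  have fin: "finite (?C ` V)" using assms(1) by simp
  have "card (vcomp V (insert (a, b) R) ` V) = Suc (card ?rest)"
    unfolding vcomp_image_insert_nconn[OF assms(2,3)] using fin notin by (simp add: card_insert_disjoint)
  moreover have "card ?rest = card (?C ` V) - 2"
    using ne assms(2,3) fin by (simp add: card_Diff_subset)
  moreover have "card {?C a, ?C b} \<le> card (?C ` V)"
    by (rule card_mono[OF fin]) (simp add: assms(2,3))
  ultimately show ?thesis unfolding ncomp_eq_card_vcomp using ne by simp
qed

section \<open>Gain graphs: balance and the graphic rank\<close>

abbreviation joined_by :: "'e gain_graph \<Rightarrow> nat \<Rightarrow> 'e set \<Rightarrow> 'e \<Rightarrow> bool" where
  "joined_by G n S e \<equiv> conn {1..n} (gends G ` S) (fst (gends G e)) (snd (gends G e))"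

lemma gain_graph_endpoints:
  assumes "gain_graph n G" "e \<in> gedges G"
  shows "fst (gends G e) \<in> {1..n}" "snd (gends G e) \<in> {1..n}" "fst (gends G e) \<noteq> snd (gends G e)"
  using assms unfolding gain_graph_def by auto

lemma gain_graph_finite: "gain_graph n G \<Longrightarrow> finite (gedges G)"
  unfolding gain_graph_def by auto

lemma joined_by_member:
  assumes "gain_graph n G" "e \<in> S" "S \<subseteq> gedges G"
  shows "joined_by G n S e"
  using gain_graph_endpoints[OF assms(1)] assms(2,3) by (intro conn_edge) auto

lemma joined_by_empty:
  assumes "gain_graph n G" "e \<in> gedges G"
  shows "\<not> joined_by G n {} e"
  using gain_graph_endpoints[OF assms] by (simp add: conn_empty)

lemma joins_conn:
  assumes "gain_graph n G" "e \<in> S" "S \<subseteq> gedges G" "joins G e x y"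
  shows "conn {1..n} (gends G ` S) x y"
  using assms(4) joined_by_member[OF assms(1-3)] conn_sym unfolding joins_def by force

lemma image_insert_gends:
  "gends G ` insert e S = insert (fst (gends G e), snd (gends G e)) (gends G ` S)"
  by simp

lemma ecomp_insert_joined: "joined_by G n S e \<Longrightarrow> ecomp G n (insert e S) = ecomp G n S"
  unfolding ecomp_def image_insert_gends by (rule ncomp_insert_conn)

lemma ecomp_insert_not_joined:
  assumes "gain_graph n G" "e \<in> gedges G" "\<not> joined_by G n S e"
  shows "ecomp G n (insert e S) + 1 = ecomp G n S"
  unfolding ecomp_def image_insert_gends using ncomp_insert_nconn[OF _ _ _ assms(3)] gain_graph_endpoints[OF assms(1,2)]
  by simp

lemma ecomp_le: "ecomp G n S \<le> n"
  unfolding ecomp_def using ncomp_le_card[of "{1..n}"] by simp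

lemma ecomp_empty: "ecomp G n {} = n"
  unfolding ecomp_def by (simp add: ncomp_empty)

lemma ecomp_cong:
  "conn {1..n} (gends G ` S) = conn {1..n} (gends G ` T) \<Longrightarrow> ecomp G n S = ecomp G n T"
  unfolding ecomp_def by (rule ncomp_cong)

lemma ecomp_singleton:
  assumes "gain_graph n G" "e \<in> gedges G"
  shows "ecomp G n {e} + 1 = n"
  using ecomp_insert_not_joined[OF assms joined_by_empty[OF assms]] by (simp add: ecomp_empty)

lemma graphic_rank_insert:
  assumes "gain_graph n G" "f \<in> gedges G"
  shows "n - ecomp G n (insert f B) =
    (if joined_by G n B f then n - ecomp G n B else n - ecomp G n B + 1)"
proof (cases "joined_by G n B f")
  case True then show ?thesis using ecomp_insert_joined[OF True] by simp
next
  case False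
  then show ?thesis using ecomp_insert_not_joined[OF assms False] ecomp_le[of G n B] by simp
qed

lemma conn_insert_joined:
  "joined_by G n S e \<Longrightarrow> conn {1..n} (gends G ` insert e S) = conn {1..n} (gends G ` S)"
  unfolding image_insert_gends by (rule conn_insert_same)

lemma conn_insert_edge_cong:
  "conn {1..n} (gends G ` S) = conn {1..n} (gends G ` T) \<Longrightarrow>
    conn {1..n} (gends G ` insert e S) = conn {1..n} (gends G ` insert e T)"
  unfolding image_insert_gends by (rule conn_insert_cong)

lemma balanced_subset: "balanced G S \<Longrightarrow> T \<subseteq> S \<Longrightarrow> balanced G T"
  unfolding balanced_def circle_in_def by blast

lemma balanced_empty: "balanced G {}"
  unfolding balanced_def circle_in_def by auto

lemma balanced_singleton:
  assumes "e \<in> gedges G"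
  shows "balanced G {e}"
  unfolding balanced_def
proof (intro conjI allI impI)
  fix vs es assume "circle_in G {e} vs es"
  then have "distinct es" "set es \<subseteq> {e}" "2 \<le> length es" unfolding circle_in_def by auto
  then have "card (set es) = length es" "card (set es) \<le> card {e}"
    using distinct_card[OF \<open>distinct es\<close>] card_mono[of "{e}" "set es"] by auto
  with \<open>2 \<le> length es\<close> show "circle_gain G vs es = 0" by simp
qed (use assms in simp)

lemma mod_add_Suc_neq:
  fixes m k L :: nat
  assumes "k + 1 < L" "m < L"
  shows "(m + 1 + k) mod L \<noteq> m"
proof (cases "m + 1 + k < L")
  case False
  then have "(m + 1 + k) mod L = (m + 1 + k - L) mod L" by (simp add: mod_if)
  also have "\<dots> = m + 1 + k - L" using assms by simp
  finally show ?thesis using assms False by linarith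
qed simp

lemma circle_edge_endpoints_conn:
  assumes gg: "gain_graph n G" and c: "circle_in G (insert e B) vs es" and B: "B \<subseteq> gedges G"
    and m: "m < length es" "es ! m = e"
  shows "conn {1..n} (gends G ` B) (vs ! ((m + 1) mod length es)) (vs ! m)"
proof -
  let ?L = "length es"
  have L: "2 \<le> ?L" "distinct es" "set es \<subseteq> insert e B"
    "\<And>k. k < ?L \<Longrightarrow> joins G (es ! k) (vs ! k) (vs ! ((k + 1) mod ?L))"
    using c unfolding circle_in_def by auto
  have walk: "conn {1..n} (gends G ` B) (vs ! ((m + 1) mod ?L)) (vs ! ((m + 1 + k) mod ?L))"
    if "k \<le> ?L - 1" for k
    using that
  proof (induction k)
    case (Suc k)
    let ?p = "(m + 1 + k) mod ?L"
    have "0 < ?L" using L(1) by linarith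
    then have pl: "?p < ?L" by simp
    have "k + 1 < ?L" using Suc.prems L(1) by simp
    then have "?p \<noteq> m" using m(1) by (rule mod_add_Suc_neq)
    then have "es ! ?p \<noteq> e" using nth_eq_iff_index_eq[OF L(2) pl m(1)] m(2) by simp
    then have eB: "es ! ?p \<in> B" using L(3) pl nth_mem by blast
    have "conn {1..n} (gends G ` B) (vs ! ?p) (vs ! ((?p + 1) mod ?L))"
      by (rule joins_conn[OF gg eB B L(4)[OF pl]])
    moreover have "(?p + 1) mod ?L = (m + 1 + Suc k) mod ?L" by (simp add: mod_Suc_eq)
    moreover have "conn {1..n} (gends G ` B) (vs ! ((m + 1) mod ?L)) (vs ! ?p)"
      using Suc by simp
    ultimately show ?case using conn_trans[of "{1..n}" "gends G ` B"] by simp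
  qed simp
  have "m + 1 + (?L - 1) = m + ?L" using L(1) by simp
  then have "(m + 1 + (?L - 1)) mod ?L = m" using m by simp
  then show ?thesis using walk[of "?L - 1"] by simp
qed

lemma balanced_insert_bridge:
  assumes gg: "gain_graph n G" and bal: "balanced G B" and e: "e \<in> gedges G"
    and nj: "\<not> joined_by G n B e"
  shows "balanced G (insert e B)"
  unfolding balanced_def
proof (intro conjI allI impI)
  show "insert e B \<subseteq> gedges G" using bal e unfolding balanced_def by auto
next
  fix vs es assume c: "circle_in G (insert e B) vs es"
  have B: "B \<subseteq> gedges G" using bal unfolding balanced_def by auto
  show "circle_gain G vs es = 0"
  proof (cases "e \<in> set es")
    case False
    then have "circle_in G B vs es" using c unfolding circle_in_def by auto
    then show ?thesis using bal unfolding balanced_def by auto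
  next
    case True
    then obtain m where m: "m < length es" "es ! m = e" by (metis in_set_conv_nth)
    have w: "conn {1..n} (gends G ` B) (vs ! ((m + 1) mod length es)) (vs ! m)"
      by (rule circle_edge_endpoints_conn[OF gg c B m])
    have "joins G e (vs ! m) (vs ! ((m + 1) mod length es))"
      using c m unfolding circle_in_def by auto
    then have "joined_by G n B e" using w conn_sym[OF w] unfolding joins_def by auto
    with nj show ?thesis by blast
  qed
qed

lemma balanced_extends_to_flat:
  assumes gg: "gain_graph n G" and bal: "balanced G B"
  obtains F where "B \<subseteq> F" "balanced_flat G n F"
    "conn {1..n} (gends G ` F) = conn {1..n} (gends G ` B)"
proof -
  let ?FF = "{X. B \<subseteq> X \<and> balanced G X \<and> conn {1..n} (gends G ` X) = conn {1..n} (gends G ` B)}"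
  have "?FF \<subseteq> Pow (gedges G)" unfolding balanced_def by blast
  then have fin: "finite ?FF" using gain_graph_finite[OF gg] by (meson finite_Pow_iff finite_subset)
  have "Max (card ` ?FF) \<in> card ` ?FF" using fin bal by (intro Max_in) auto
  then obtain F where F: "F \<in> ?FF" "card F = Max (card ` ?FF)" by auto
  have maxF: "card X \<le> card F" if "X \<in> ?FF" for X
    unfolding F(2) using fin that by (intro Max_ge) auto
  have finF: "finite F"
    using F(1) gain_graph_finite[OF gg] finite_subset unfolding balanced_def by auto
  have "balanced_flat G n F"
    unfolding balanced_flat_def
  proof (intro conjI ballI impI)
    fix e assume e: "e \<in> gedges G - F" and j: "joined_by G n F e"
    show "\<not> balanced G (insert e F)"
    proof
      assume "balanced G (insert e F)"
      then have "insert e F \<in> ?FF" using F(1) conn_insert_joined[OF j] by auto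
      then have "card (insert e F) \<le> card F" by (rule maxF)
      with finF e show False by simp
    qed
  qed (use F in simp)
  with F that show ?thesis by blast
qed

lemma balanced_spanning_subset:
  assumes gg: "gain_graph n G" and A: "A \<subseteq> gedges G"
  obtains B where "B \<subseteq> A" "balanced G B" "conn {1..n} (gends G ` B) = conn {1..n} (gends G ` A)"
proof -
  have "finite A" using A gain_graph_finite[OF gg] finite_subset by blast
  then have "\<exists>B \<subseteq> A. balanced G B \<and> conn {1..n} (gends G ` B) = conn {1..n} (gends G ` A)"
    using A
  proof (induction A rule: finite_induct)
    case empty then show ?case using balanced_empty by blast
  next
    case (insert e A)
    then obtain B where B: "B \<subseteq> A" "balanced G B" "conn {1..n} (gends G ` B) = conn {1..n} (gends G ` A)"
      by auto
    have cong: "conn {1..n} (gends G ` insert e B) = conn {1..n} (gends G ` insert e A)"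
      using conn_insert_edge_cong[OF B(3)] .
    show ?case
    proof (cases "joined_by G n B e")
      case True
      then have "conn {1..n} (gends G ` B) = conn {1..n} (gends G ` insert e A)"
        using cong conn_insert_joined[OF True] by simp
      then show ?thesis using B(1,2) by blast
    next
      case False
      then have "balanced G (insert e B)" using balanced_insert_bridge[OF gg B(2)] insert by auto
      then show ?thesis using B(1) cong by blast
    qed
  qed
  with that show ?thesis by blast
qed

lemma sum_rotate:
  fixes g :: "nat \<Rightarrow> 'a::comm_monoid_add"
  assumes "0 < L"
  shows "(\<Sum>m<L. g ((m + 1) mod L)) = (\<Sum>m<L. g m)"
proof -
  obtain L' where L: "L = Suc L'" using assms by (cases L) auto
  have "(\<Sum>m<Suc L'. g ((m + 1) mod Suc L')) = (\<Sum>m<L'. g (Suc m)) + g 0"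
    by (simp add: sum.lessThan_Suc)
  also have "\<dots> = (\<Sum>m<Suc L'. g m)" by (subst sum.lessThan_Suc_shift) (simp add: add.commute)
  finally show ?thesis unfolding L .
qed

text \<open>The gain of a circle telescopes to zero.\<close>

lemma potential_balanced:
  assumes pot: "\<And>e. e \<in> gedges G \<Longrightarrow> ggain G e = phi (snd (gends G e)) - phi (fst (gends G e))"
    and S: "S \<subseteq> gedges G"
  shows "balanced G S"
  unfolding balanced_def
proof (intro conjI allI impI S)
  fix vs es assume c: "circle_in G S vs es"
  let ?L = "length es" and ?phi = "\<lambda>m. phi (vs ! m)"
  have L: "2 \<le> ?L" "set es \<subseteq> S" "\<And>m. m < ?L \<Longrightarrow> joins G (es ! m) (vs ! m) (vs ! ((m + 1) mod ?L))"
    using c unfolding circle_in_def by auto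
  have "gain G (es ! m) (vs ! m) (vs ! ((m + 1) mod ?L)) = ?phi ((m + 1) mod ?L) - ?phi m"
    if m: "m < ?L" for m
  proof -
    have "es ! m \<in> gedges G" using L(2) S nth_mem[OF m] by blast
    with L(3)[OF m] show ?thesis using pot[of "es ! m"] unfolding joins_def gain_def by auto
  qed
  then have "circle_gain G vs es = (\<Sum>m<?L. ?phi ((m + 1) mod ?L)) - (\<Sum>m<?L. ?phi m)"
    unfolding circle_gain_def by (simp add: sum_subtractf)
  moreover have "0 < ?L" using L(1) by linarith
  ultimately show "circle_gain G vs es = 0" using sum_rotate[of ?L ?phi] by simp
qed

section \<open>The affinographic arrangement and its normals\<close>

definition edge_normal :: "'e gain_graph \<Rightarrow> (nat \<Rightarrow> 'a::euclidean_space) \<Rightarrow> 'e \<Rightarrow> 'a" where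
  "edge_normal G Q e = Q (snd (gends G e)) - Q (fst (gends G e))"

definition edge_offset :: "'e gain_graph \<Rightarrow> (nat \<Rightarrow> 'a::euclidean_space) \<Rightarrow> 'e \<Rightarrow> real" where
  "edge_offset G Q e =
     (ggain G e - (norm (Q (fst (gends G e))))\<^sup>2 + (norm (Q (snd (gends G e))))\<^sup>2) / 2"

lemma psi_eq_affine: "psi Q i j P = 2 * ((Q j - Q i) \<bullet> P) + (norm (Q i))\<^sup>2 - (norm (Q j))\<^sup>2"
  unfolding psi_def dist_norm power2_norm_eq_inner
  by (simp add: inner_diff_left inner_diff_right inner_commute algebra_simps)

lemma hyp_eq: "hyp G Q e = {P. edge_normal G Q e \<bullet> P = edge_offset G Q e}"
  unfolding hyp_def edge_normal_def edge_offset_def psi_eq_affine by (auto simp: algebra_simps)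

lemma Inter_hyp_eq: "\<Inter> (hyp G Q ` B) = {P. \<forall>e\<in>B. edge_normal G Q e \<bullet> P = edge_offset G Q e}"
  unfolding hyp_eq by auto

lemma conn_imp_diff_in_span:
  assumes "conn {1..n} (gends G ` S) i j"
  shows "Q j - Q i \<in> span (edge_normal G Q ` S)"
  using assms unfolding conn_def
proof (induction rule: rtrancl_induct)
  case (step y z)
  then obtain e where e: "e \<in> S" "gends G e = (y, z) \<or> gends G e = (z, y)" by auto
  then have "Q z - Q y \<in> span (edge_normal G Q ` S)"
    using span_base[of "edge_normal G Q e" "edge_normal G Q ` S"]
      span_neg[of "edge_normal G Q e" "edge_normal G Q ` S"]
    unfolding edge_normal_def by auto
  then have "(Q y - Q i) + (Q z - Q y) \<in> span (edge_normal G Q ` S)" using step span_add by blast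
  then show ?case by simp
qed (simp add: span_zero)

lemma joined_by_imp_normal_in_span:
  assumes "joined_by G n S e"
  shows "edge_normal G Q e \<in> span (edge_normal G Q ` S)"
  using conn_imp_diff_in_span[OF assms, of Q] by (simp only: edge_normal_def[of G Q e])

lemma span_normals_inner_const:
  assumes v: "v \<in> span (edge_normal G Q ` B)"
    and P: "P \<in> \<Inter> (hyp G Q ` B)" and P': "P' \<in> \<Inter> (hyp G Q ` B)"
  shows "v \<bullet> P = v \<bullet> P'"
proof -
  have "orthogonal (P - P') u" if "u \<in> edge_normal G Q ` B" for u
    using that P P' unfolding Inter_hyp_eq orthogonal_def by (force simp: inner_diff_left inner_commute)
  then have "orthogonal (P - P') v" by (rule orthogonal_to_span[OF v])
  then show ?thesis unfolding orthogonal_def by (simp add: inner_diff inner_commute)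
qed

lemma arr_lattice_nonempty: "s \<in> arr_lattice G Q \<Longrightarrow> s \<noteq> {}"
  unfolding arr_lattice_def by auto

lemma Inter_hyp_Eof: "s \<in> arr_lattice G Q \<Longrightarrow> \<Inter> (hyp G Q ` Eof G Q s) = s"
  unfolding arr_lattice_def Eof_def by blast

text \<open>Eof has a left inverse on the intersection lattice and reflects the order by construction,
  so general position only asks for surjectivity onto the balanced flats of rank at most d.\<close>

lemma general_position_iff_image:
  "general_position G n (Q :: nat \<Rightarrow> 'a::euclidean_space) \<longleftrightarrow>
    Eof G Q ` arr_lattice G Q = {S. balanced_flat G n S \<and> n - ecomp G n S \<le> DIM('a)}"
proof -
  have "inj_on (Eof G Q) (arr_lattice G Q)"
    by (rule inj_on_inverseI[where g = "\<lambda>S. \<Inter> (hyp G Q ` S)"]) (rule Inter_hyp_Eof)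
  moreover have "t \<subseteq> s \<longleftrightarrow> Eof G Q s \<subseteq> Eof G Q t"
    if "s \<in> arr_lattice G Q" "t \<in> arr_lattice G Q" for s t
  proof
    show "t \<subseteq> s \<Longrightarrow> Eof G Q s \<subseteq> Eof G Q t" unfolding Eof_def by blast
    assume "Eof G Q s \<subseteq> Eof G Q t"
    then have "\<Inter> (hyp G Q ` Eof G Q t) \<subseteq> \<Inter> (hyp G Q ` Eof G Q s)" by blast
    then show "t \<subseteq> s" using Inter_hyp_Eof[OF that(1)] Inter_hyp_Eof[OF that(2)] by simp
  qed
  ultimately show ?thesis unfolding general_position_def bij_betw_def by blast
qed

lemma general_position_flat_realized:
  assumes "general_position G n (Q :: nat \<Rightarrow> 'a::euclidean_space)"
    and "balanced_flat G n F" "n - ecomp G n F \<le> DIM('a)"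
  obtains s where "s \<in> arr_lattice G Q" "Eof G Q s = F"
proof -
  have "F \<in> Eof G Q ` arr_lattice G Q" using assms unfolding general_position_iff_image by simp
  with that show ?thesis by blast
qed

text \<open>Adding a bridge e to a balanced set B gives two realized flats, the closures of B and of
  B with e. If the normal of e were spanned by those of B, every point of the
  first flat would lie on the hyperplane of e, so e would belong to the closure of B.\<close>

lemma general_position_normal_not_in_span:
  fixes Q :: "nat \<Rightarrow> 'a::euclidean_space"
  assumes gg: "gain_graph n G" and gp: "general_position G n Q" and bal: "balanced G B"
    and e: "e \<in> gedges G" and nj: "\<not> joined_by G n B e"
    and rk: "n - ecomp G n B < DIM('a)"
  shows "edge_normal G Q e \<notin> span (edge_normal G Q ` B)"
proof
  assume sp: "edge_normal G Q e \<in> span (edge_normal G Q ` B)"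
  obtain F1 where F1: "B \<subseteq> F1" "balanced_flat G n F1"
      "conn {1..n} (gends G ` F1) = conn {1..n} (gends G ` B)"
    using balanced_extends_to_flat[OF gg bal] .
  obtain F2 where F2: "insert e B \<subseteq> F2" "balanced_flat G n F2"
      "conn {1..n} (gends G ` F2) = conn {1..n} (gends G ` insert e B)"
    using balanced_extends_to_flat[OF gg balanced_insert_bridge[OF gg bal e nj]] .
  have "ecomp G n (insert e B) + 1 = ecomp G n B" by (rule ecomp_insert_not_joined[OF gg e nj])
  then have rk2: "n - ecomp G n F2 \<le> DIM('a)"
    using ecomp_cong[OF F2(3)] ecomp_le[of G n B] rk by linarith
  have rk1: "n - ecomp G n F1 \<le> DIM('a)" using ecomp_cong[OF F1(3)] rk by simp
  obtain s1 where s1: "s1 \<in> arr_lattice G Q" "Eof G Q s1 = F1"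
    using general_position_flat_realized[OF gp F1(2) rk1] .
  obtain s2 where s2: "s2 \<in> arr_lattice G Q" "Eof G Q s2 = F2"
    using general_position_flat_realized[OF gp F2(2) rk2] .
  obtain P0 where "P0 \<in> s2" using arr_lattice_nonempty[OF s2(1)] by blast
  then have P0: "P0 \<in> \<Inter> (hyp G Q ` insert e B)" using F2(1) s2(2) unfolding Eof_def by blast
  have "s1 \<subseteq> hyp G Q e"
  proof
    fix P assume "P \<in> s1"
    then have "P \<in> \<Inter> (hyp G Q ` B)" using F1(1) s1(2) unfolding Eof_def by blast
    then have "edge_normal G Q e \<bullet> P = edge_normal G Q e \<bullet> P0"
      using span_normals_inner_const[OF sp] P0 by blast
    also have "\<dots> = edge_offset G Q e" using P0 unfolding Inter_hyp_eq by blast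
    finally show "P \<in> hyp G Q e" unfolding hyp_eq by simp
  qed
  then have "e \<in> F1" using s1(2) e unfolding Eof_def by blast
  moreover have "F1 \<subseteq> gedges G" using F1(2) unfolding balanced_flat_def balanced_def by blast
  ultimately have "joined_by G n F1 e" by (rule joined_by_member[OF gg])
  with nj show False unfolding F1(3) by contradiction
qed

lemma general_position_dim_normals_balanced:
  fixes Q :: "nat \<Rightarrow> 'a::euclidean_space"
  assumes gg: "gain_graph n G" and gp: "general_position G n Q" and bal: "balanced G B"
  shows "dim (edge_normal G Q ` B) = min (n - ecomp G n B) DIM('a)"
proof -
  have BE: "B \<subseteq> gedges G" using bal unfolding balanced_def by blast
  then have "finite B" using gain_graph_finite[OF gg] finite_subset by blast
  then show ?thesis using bal BE
  proof (induction B rule: finite_induct)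
    case empty then show ?case by (simp add: ecomp_empty)
  next
    case (insert e B)
    have balB: "balanced G B" and e: "e \<in> gedges G"
      using insert.prems balanced_subset by auto
    have IH: "dim (edge_normal G Q ` B) = min (n - ecomp G n B) DIM('a)"
      using insert.IH balB insert.prems(2) by blast
    have di: "dim (edge_normal G Q ` insert e B) =
        (if edge_normal G Q e \<in> span (edge_normal G Q ` B)
         then dim (edge_normal G Q ` B) else dim (edge_normal G Q ` B) + 1)"
      by (simp add: dim_insert)
    consider (joined) "joined_by G n B e"
      | (bridge) "\<not> joined_by G n B e" "n - ecomp G n B < DIM('a)"
      | (full) "\<not> joined_by G n B e" "DIM('a) \<le> n - ecomp G n B"
      by linarith
    then show ?case
    proof cases
      case joined
      then show ?thesis
        using di IH ecomp_insert_joined[OF joined] joined_by_imp_normal_in_span[OF joined] by simp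
    next
      case bridge
      then have "edge_normal G Q e \<notin> span (edge_normal G Q ` B)"
        using general_position_normal_not_in_span[OF gg gp balB e] by blast
      then show ?thesis
        using di IH ecomp_insert_not_joined[OF gg e bridge(1)] ecomp_le[of G n B] bridge(2) by simp
    next
      case full
      then show ?thesis
        using di IH ecomp_insert_not_joined[OF gg e full(1)] ecomp_le[of G n B]
          dim_subset_UNIV[of "edge_normal G Q ` insert e B"]
        by (simp split: if_splits)
    qed
  qed
qed

lemma general_position_dim_normals:
  fixes Q :: "nat \<Rightarrow> 'a::euclidean_space"
  assumes gg: "gain_graph n G" and gp: "general_position G n Q" and A: "A \<subseteq> gedges G"
  shows "dim (edge_normal G Q ` A) = min (n - ecomp G n A) DIM('a)"
proof -
  obtain B where B: "B \<subseteq> A" "balanced G B" "conn {1..n} (gends G ` B) = conn {1..n} (gends G ` A)"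
    using balanced_spanning_subset[OF gg A] .
  have "edge_normal G Q f \<in> span (edge_normal G Q ` B)" if "f \<in> A" for f
  proof -
    have "joined_by G n A f" by (rule joined_by_member[OF gg that A])
    then have "joined_by G n B f" using B(3) by simp
    then show ?thesis by (rule joined_by_imp_normal_in_span)
  qed
  then have "edge_normal G Q ` A \<subseteq> span (edge_normal G Q ` B)" by blast
  moreover have "edge_normal G Q ` B \<subseteq> span (edge_normal G Q ` A)"
    using B(1) span_superset by blast
  ultimately have "span (edge_normal G Q ` A) = span (edge_normal G Q ` B)"
    by (simp only: span_eq)
  then have "dim (edge_normal G Q ` A) = dim (edge_normal G Q ` B)"
    using dim_span[of "edge_normal G Q ` A"] dim_span[of "edge_normal G Q ` B"] by simp
  also have "\<dots> = min (n - ecomp G n A) DIM('a)"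
    unfolding general_position_dim_normals_balanced[OF gg gp B(2)] ecomp_cong[OF B(3)] ..
  finally show ?thesis .
qed

lemma general_position_normal_in_span_iff:
  fixes Q :: "nat \<Rightarrow> 'a::euclidean_space"
  assumes gg: "gain_graph n G" and gp: "general_position G n Q" and BE: "B \<subseteq> gedges G"
    and e: "e \<in> gedges G" and rk: "n - ecomp G n B < DIM('a)"
  shows "edge_normal G Q e \<in> span (edge_normal G Q ` B) \<longleftrightarrow> joined_by G n B e"
proof
  assume sp: "edge_normal G Q e \<in> span (edge_normal G Q ` B)"
  show "joined_by G n B e"
  proof (rule ccontr)
    assume "\<not> joined_by G n B e"
    then have "n - ecomp G n (insert e B) = n - ecomp G n B + 1"
      using graphic_rank_insert[OF gg e, of B] by simp
    moreover have "dim (edge_normal G Q ` insert e B) = dim (edge_normal G Q ` B)"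
      using sp by (simp add: dim_insert)
    moreover have "dim (edge_normal G Q ` insert e B) = min (n - ecomp G n (insert e B)) DIM('a)"
      by (rule general_position_dim_normals[OF gg gp]) (use BE e in blast)
    moreover have "dim (edge_normal G Q ` B) = min (n - ecomp G n B) DIM('a)"
      by (rule general_position_dim_normals[OF gg gp BE])
    ultimately show False using rk by simp
  qed
qed (rule joined_by_imp_normal_in_span)

lemma general_position_normal_nonzero:
  fixes Q :: "nat \<Rightarrow> 'a::euclidean_space"
  assumes gg: "gain_graph n G" and gp: "general_position G n Q" and e: "e \<in> gedges G"
  shows "edge_normal G Q e \<noteq> 0"
proof
  assume z: "edge_normal G Q e = 0"
  have "dim (edge_normal G Q ` {e}) = min (n - ecomp G n {e}) DIM('a)"
    by (rule general_position_dim_normals[OF gg gp]) (use e in simp)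
  moreover have "dim (edge_normal G Q ` {e}) = 0" using z by (simp add: dim_insert span_zero)
  ultimately show False using ecomp_singleton[OF gg e] DIM_positive[where 'a='a] by simp
qed

section \<open>Homogenization\<close>

text \<open>When the affine intersection of the hyperplanes of B is nonempty, homog_flat G Q B is the
  cone of homogeneous coordinates of its projective closure; ideal_flat G Q B is the
  intersection of that cone with the ideal hyperplane.\<close>

definition homog_flat :: "'e gain_graph \<Rightarrow> (nat \<Rightarrow> 'a::euclidean_space) \<Rightarrow> 'e set \<Rightarrow> ('a \<times> real) set" where
  "homog_flat G Q B = {p. \<forall>e\<in>B. edge_normal G Q e \<bullet> fst p = edge_offset G Q e * snd p}"

definition ideal_flat :: "'e gain_graph \<Rightarrow> (nat \<Rightarrow> 'a::euclidean_space) \<Rightarrow> 'e set \<Rightarrow> ('a \<times> real) set" where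
  "ideal_flat G Q B = {p. snd p = 0 \<and> (\<forall>e\<in>B. edge_normal G Q e \<bullet> fst p = 0)}"

lemma hP_eq_homog_flat:
  assumes nz: "edge_normal G Q e \<noteq> 0"
  shows "hP G Q e = homog_flat G Q {e}"
proof
  have sub: "subspace (homog_flat G Q {e})"
    unfolding subspace_def homog_flat_def by (auto simp: inner_add_right algebra_simps)
  show "hP G Q e \<subseteq> homog_flat G Q {e}"
    unfolding hP_def by (rule span_minimal[OF _ sub]) (auto simp: homog_flat_def hyp_eq)
next
  show "homog_flat G Q {e} \<subseteq> hP G Q e"
  proof
    fix p assume p: "p \<in> homog_flat G Q {e}"
    obtain x t where xt: "p = (x, t)" by force
    have eq: "edge_normal G Q e \<bullet> x = edge_offset G Q e * t" using p xt unfolding homog_flat_def by simp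
    let ?S = "(\<lambda>P. (P, 1::real)) ` hyp G Q e"
    show "p \<in> hP G Q e"
    proof (cases "t = 0")
      case False
      have "x /\<^sub>R t \<in> hyp G Q e" using eq False unfolding hyp_eq by (simp add: inner_scaleR_right field_simps)
      then have "(x /\<^sub>R t, 1) \<in> span ?S" by (intro span_base) blast
      then have "t *\<^sub>R (x /\<^sub>R t, 1) \<in> span ?S" by (rule span_scale)
      then show ?thesis using False xt unfolding hP_def by simp
    next
      case True
      define P0 where "P0 = (edge_offset G Q e / (edge_normal G Q e \<bullet> edge_normal G Q e)) *\<^sub>R edge_normal G Q e"
      have P0: "P0 \<in> hyp G Q e" using nz unfolding hyp_eq P0_def by simp
      have P1: "P0 + x \<in> hyp G Q e" using P0 eq True unfolding hyp_eq by (simp add: inner_add_right)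
      have "(P0 + x, 1) - (P0, 1) \<in> span ?S"
        by (intro span_diff span_base) (use P0 P1 in blast)+
      then show ?thesis using True xt unfolding hP_def by simp
    qed
  qed
qed

lemma Inter_Hfam_eq:
  assumes nz: "\<forall>e\<in>gedges G. edge_normal G Q e \<noteq> 0" and A: "A \<subseteq> lift_ground G"
  shows "\<Inter> (Hfam G Q ` A) =
    (if None \<in> A then ideal_flat G Q {e. Some e \<in> A} else homog_flat G Q {e. Some e \<in> A})"
proof -
  have H: "Hfam G Q (Some e) = homog_flat G Q {e}" if "Some e \<in> A" for e
  proof -
    have "edge_normal G Q e \<noteq> 0" using that A nz unfolding lift_ground_def by auto
    then show ?thesis unfolding Hfam_def by (simp add: hP_eq_homog_flat)
  qed
  have "p \<in> \<Inter> (Hfam G Q ` A) \<longleftrightarrow>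
      (None \<in> A \<longrightarrow> snd p = 0) \<and> (\<forall>e. Some e \<in> A \<longrightarrow> p \<in> homog_flat G Q {e})" for p
  proof
    assume "p \<in> \<Inter> (Hfam G Q ` A)"
    then show "(None \<in> A \<longrightarrow> snd p = 0) \<and> (\<forall>e. Some e \<in> A \<longrightarrow> p \<in> homog_flat G Q {e})"
      using H by (force simp: Hfam_def h_inf_def)
  next
    assume r: "(None \<in> A \<longrightarrow> snd p = 0) \<and> (\<forall>e. Some e \<in> A \<longrightarrow> p \<in> homog_flat G Q {e})"
    show "p \<in> \<Inter> (Hfam G Q ` A)"
    proof
      fix a assume "a \<in> A"
      with r H show "p \<in> Hfam G Q a" by (cases a) (simp_all add: Hfam_def h_inf_def)
    qed
  qed
  then have "\<Inter> (Hfam G Q ` A) =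
      {p. (None \<in> A \<longrightarrow> snd p = 0) \<and> (\<forall>e. Some e \<in> A \<longrightarrow> p \<in> homog_flat G Q {e})}"
    by blast
  then show ?thesis by (auto simp: ideal_flat_def homog_flat_def)
qed

lemma homog_flat_subset_iff:
  assumes ne: "\<Inter> (hyp G Q ` B) \<noteq> {}"
  shows "homog_flat G Q B \<subseteq> homog_flat G Q {e} \<longleftrightarrow> \<Inter> (hyp G Q ` B) \<subseteq> hyp G Q e"
proof
  assume L: "homog_flat G Q B \<subseteq> homog_flat G Q {e}"
  show "\<Inter> (hyp G Q ` B) \<subseteq> hyp G Q e"
  proof
    fix P assume "P \<in> \<Inter> (hyp G Q ` B)"
    then have "(P, 1) \<in> homog_flat G Q B" unfolding Inter_hyp_eq homog_flat_def by simp
    then have "(P, 1) \<in> homog_flat G Q {e}" using L by blast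
    then show "P \<in> hyp G Q e" unfolding homog_flat_def hyp_eq by simp
  qed
next
  assume S: "\<Inter> (hyp G Q ` B) \<subseteq> hyp G Q e"
  obtain P0 where P0: "P0 \<in> \<Inter> (hyp G Q ` B)" using ne by blast
  show "homog_flat G Q B \<subseteq> homog_flat G Q {e}"
  proof
    fix p assume p: "p \<in> homog_flat G Q B"
    obtain x t where xt: "p = (x, t)" by force
    show "p \<in> homog_flat G Q {e}"
    proof (cases "t = 0")
      case False
      have "x /\<^sub>R t \<in> \<Inter> (hyp G Q ` B)" using p xt False unfolding Inter_hyp_eq homog_flat_def
        by (auto simp: inner_scaleR_right field_simps)
      then have "x /\<^sub>R t \<in> hyp G Q e" using S by blast
      then show ?thesis using xt False unfolding hyp_eq homog_flat_def by (simp add: inner_scaleR_right field_simps)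
    next
      case True
      have "P0 + x \<in> \<Inter> (hyp G Q ` B)" using p xt True P0 unfolding Inter_hyp_eq homog_flat_def
        by (auto simp: inner_add_right)
      then have "P0 + x \<in> hyp G Q e" using S by blast
      moreover have "P0 \<in> hyp G Q e" using S P0 by blast
      ultimately show ?thesis using xt True unfolding hyp_eq homog_flat_def by (simp add: inner_add_right)
    qed
  qed
qed

lemma homog_flat_not_subset_h_inf:
  assumes ne: "\<Inter> (hyp G Q ` B) \<noteq> {}"
  shows "\<not> homog_flat G Q B \<subseteq> h_inf"
proof
  assume L: "homog_flat G Q B \<subseteq> h_inf"
  obtain P0 where P0: "P0 \<in> \<Inter> (hyp G Q ` B)" using ne by blast
  then have "(P0, 1) \<in> homog_flat G Q B" unfolding Inter_hyp_eq homog_flat_def by simp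
  then show False using L unfolding h_inf_def by auto
qed

lemma homog_flat_eq_ideal_flat:
  assumes e: "\<Inter> (hyp G Q ` B) = {}"
  shows "homog_flat G Q B = ideal_flat G Q B"
proof
  show "homog_flat G Q B \<subseteq> ideal_flat G Q B"
  proof
    fix p assume p: "p \<in> homog_flat G Q B"
    obtain x t where xt: "p = (x, t)" by force
    have "t = 0"
    proof (rule ccontr)
      assume "t \<noteq> 0"
      then have "x /\<^sub>R t \<in> \<Inter> (hyp G Q ` B)" using p xt unfolding Inter_hyp_eq homog_flat_def
        by (auto simp: inner_scaleR_right field_simps)
      then show False using e by blast
    qed
    then show "p \<in> ideal_flat G Q B" using p xt unfolding homog_flat_def ideal_flat_def by simp
  qed
  show "ideal_flat G Q B \<subseteq> homog_flat G Q B" unfolding homog_flat_def ideal_flat_def by auto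
qed

lemma ideal_flat_subset_h_inf: "ideal_flat G Q B \<subseteq> h_inf"
  unfolding ideal_flat_def h_inf_def by auto

lemma not_in_span_orthogonal_witness:
  fixes x :: "'a::euclidean_space"
  assumes nsp: "x \<notin> span S"
  obtains y where "\<And>s. s \<in> S \<Longrightarrow> s \<bullet> y = 0" "x \<bullet> y \<noteq> 0"
proof -
  have "span S \<subset> span (insert x S)"
    using nsp span_superset[of "insert x S"] span_mono[of S "insert x S"] by blast
  then obtain y where y: "y \<noteq> 0" "y \<in> span (insert x S)" "\<And>z. z \<in> span S \<Longrightarrow> orthogonal y z"
    using orthogonal_to_subspace_exists_gen by blast
  obtain k where k: "y - k *\<^sub>R x \<in> span S" using y(2) span_breakdown_eq by blast
  have "(y - k *\<^sub>R x) \<bullet> y = 0" using y(3)[OF k] unfolding orthogonal_def by (simp add: inner_commute)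
  then have "y \<bullet> y = k * (x \<bullet> y)" by (simp add: inner_diff_left)
  then have "x \<bullet> y \<noteq> 0" using y(1) by auto
  moreover have "s \<bullet> y = 0" if "s \<in> S" for s
    using y(3)[OF span_base[OF that]] unfolding orthogonal_def by (simp add: inner_commute)
  ultimately show ?thesis using that by blast
qed

lemma ideal_flat_subset_homog_flat_iff:
  "ideal_flat G Q B \<subseteq> homog_flat G Q {e} \<longleftrightarrow> edge_normal G Q e \<in> span (edge_normal G Q ` B)"
proof
  assume sp: "edge_normal G Q e \<in> span (edge_normal G Q ` B)"
  show "ideal_flat G Q B \<subseteq> homog_flat G Q {e}"
  proof
    fix p assume p: "p \<in> ideal_flat G Q B"
    then have "orthogonal (fst p) s" if "s \<in> edge_normal G Q ` B" for s
      using that unfolding ideal_flat_def orthogonal_def by (auto simp: inner_commute)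
    then have "orthogonal (fst p) (edge_normal G Q e)" by (rule orthogonal_to_span[OF sp])
    then have "edge_normal G Q e \<bullet> fst p = 0" by (simp add: orthogonal_def inner_commute)
    then show "p \<in> homog_flat G Q {e}" using p unfolding ideal_flat_def homog_flat_def by simp
  qed
next
  assume L: "ideal_flat G Q B \<subseteq> homog_flat G Q {e}"
  show "edge_normal G Q e \<in> span (edge_normal G Q ` B)"
  proof (rule ccontr)
    assume "edge_normal G Q e \<notin> span (edge_normal G Q ` B)"
    then obtain y where y: "\<And>s. s \<in> edge_normal G Q ` B \<Longrightarrow> s \<bullet> y = 0"
        "edge_normal G Q e \<bullet> y \<noteq> 0"
      using not_in_span_orthogonal_witness[of "edge_normal G Q e" "edge_normal G Q ` B"] by blast
    then have "(y, 0) \<in> ideal_flat G Q B" unfolding ideal_flat_def by simp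
    then have "(y, 0) \<in> homog_flat G Q {e}" using L by blast
    with y(2) show False unfolding homog_flat_def by simp
  qed
qed

lemma hP_UNIV:
  assumes "hyp G Q e = UNIV"
  shows "hP G Q e = UNIV"
proof -
  let ?S = "(\<lambda>P. (P, 1::real)) ` hyp G Q e"
  have "(x, t) \<in> span ?S" for x t
  proof (cases "t = 0")
    case False
    have "(x /\<^sub>R t, 1) \<in> span ?S" using assms by (intro span_base) blast
    then have "t *\<^sub>R (x /\<^sub>R t, 1) \<in> span ?S" by (rule span_scale)
    with False show ?thesis by simp
  next
    case True
    have "(x, 1) - (0, 1) \<in> span ?S" using assms by (intro span_diff span_base) blast+
    with True show ?thesis by simp
  qed
  then show ?thesis unfolding hP_def by auto
qed

section \<open>The complete lift matroid\<close>

lemma lift_rank_Some: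
  "lift_rank G n (Some ` B) = n - ecomp G n B + (if balanced G B then 0 else 1)"
  unfolding lift_rank_def by (simp add: image_iff)

lemma lift_rank_insert_None: "lift_rank G n (insert None (Some ` B)) = n - ecomp G n B + 1"
  unfolding lift_rank_def by (simp add: image_iff)

lemma Some_subset_lift_ground: "B \<subseteq> gedges G \<Longrightarrow> Some ` B \<subseteq> lift_ground G"
  unfolding lift_ground_def by auto

lemma insert_None_subset_lift_ground: "B \<subseteq> gedges G \<Longrightarrow> insert None (Some ` B) \<subseteq> lift_ground G"
  unfolding lift_ground_def by auto

lemma lift_ground_subset_cases:
  assumes "F \<subseteq> lift_ground G"
  shows "{e. Some e \<in> F} \<subseteq> gedges G"
    "F = (if None \<in> F then insert None (Some ` {e. Some e \<in> F}) else Some ` {e. Some e \<in> F})"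
proof -
  show "{e. Some e \<in> F} \<subseteq> gedges G" using assms unfolding lift_ground_def by auto
  have "x \<in> F \<longleftrightarrow> x \<in> (if None \<in> F then insert None (Some ` {e. Some e \<in> F}) else Some ` {e. Some e \<in> F})"
    for x by (cases x) auto
  then show "F = (if None \<in> F then insert None (Some ` {e. Some e \<in> F}) else Some ` {e. Some e \<in> F})"
    by blast
qed

lemma lift_flat_Some_imp_balanced_flat:
  assumes lf: "lift_flat G n (Some ` B)"
  shows "balanced_flat G n B"
proof -
  have step: "lift_rank G n (Some ` B) < lift_rank G n (insert x (Some ` B))"
    if "x \<in> lift_ground G - Some ` B" for x
    using lf that unfolding lift_flat_def by blast
  have bal: "balanced G B"
  proof (rule ccontr)
    assume nb: "\<not> balanced G B"
    have "None \<in> lift_ground G - Some ` B" unfolding lift_ground_def by auto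
    from step[OF this] show False using nb by (simp add: lift_rank_Some lift_rank_insert_None)
  qed
  show ?thesis unfolding balanced_flat_def
  proof (intro conjI ballI impI bal)
    fix f assume f: "f \<in> gedges G - B" and j: "joined_by G n B f"
    have "Some f \<in> lift_ground G - Some ` B" using f unfolding lift_ground_def by auto
    from step[OF this] have "lift_rank G n (Some ` B) < lift_rank G n (Some ` insert f B)" by simp
    then show "\<not> balanced G (insert f B)"
      using bal ecomp_insert_joined[OF j] lift_rank_Some[of G n "insert f B"]
      by (simp add: lift_rank_Some split: if_splits)
  qed
qed

lemma balanced_flat_imp_lift_flat_Some:
  assumes gg: "gain_graph n G" and bf: "balanced_flat G n B"
  shows "lift_flat G n (Some ` B)"
  unfolding lift_flat_def
proof (intro conjI ballI)
  have bal: "balanced G B" using bf unfolding balanced_flat_def by blast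
  then show "Some ` B \<subseteq> lift_ground G" unfolding balanced_def lift_ground_def by blast
  fix x assume x: "x \<in> lift_ground G - Some ` B"
  show "lift_rank G n (Some ` B) < lift_rank G n (insert x (Some ` B))"
  proof (cases x)
    case None then show ?thesis using bal by (simp add: lift_rank_Some lift_rank_insert_None)
  next
    case (Some f)
    have f: "f \<in> gedges G - B" using x Some unfolding lift_ground_def by auto
    have ins: "insert x (Some ` B) = Some ` insert f B" using Some by simp
    show ?thesis
    proof (cases "joined_by G n B f")
      case True
      then have "\<not> balanced G (insert f B)" using bf f unfolding balanced_flat_def by blast
      then show ?thesis unfolding ins
        using bal ecomp_insert_joined[OF True] lift_rank_Some[of G n "insert f B"]
        by (simp add: lift_rank_Some)
    next
      case False
      then have "n - ecomp G n (insert f B) = n - ecomp G n B + 1"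
        using graphic_rank_insert[OF gg, of f B] f by simp
      then show ?thesis unfolding ins using bal lift_rank_Some[of G n "insert f B"]
        by (simp add: lift_rank_Some)
    qed
  qed
qed

lemma lift_flat_Some_iff:
  "gain_graph n G \<Longrightarrow> lift_flat G n (Some ` B) \<longleftrightarrow> balanced_flat G n B"
  using lift_flat_Some_imp_balanced_flat balanced_flat_imp_lift_flat_Some by blast

definition graphic_closure :: "'e gain_graph \<Rightarrow> nat \<Rightarrow> 'e set \<Rightarrow> 'e set" where
  "graphic_closure G n B = {e \<in> gedges G. joined_by G n B e}"

lemma subset_graphic_closure:
  assumes "gain_graph n G" "B \<subseteq> gedges G"
  shows "B \<subseteq> graphic_closure G n B"
  unfolding graphic_closure_def using assms(2) joined_by_member[OF assms(1) _ assms(2)] by blast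

lemma conn_graphic_closure:
  assumes gg: "gain_graph n G" and BE: "B \<subseteq> gedges G"
  shows "conn {1..n} (gends G ` graphic_closure G n B) = conn {1..n} (gends G ` B)"
proof (rule conn_eqI)
  show "gends G ` B \<subseteq> gends G ` graphic_closure G n B"
    using subset_graphic_closure[OF gg BE] by blast
  fix a b assume "(a, b) \<in> gends G ` graphic_closure G n B"
  then obtain e where "e \<in> graphic_closure G n B" "gends G e = (a, b)" by auto
  then show "conn {1..n} (gends G ` B) a b" unfolding graphic_closure_def by auto
qed

lemma lift_flat_insert_None_iff:
  assumes gg: "gain_graph n G" and BE: "B \<subseteq> gedges G"
  shows "lift_flat G n (insert None (Some ` B)) \<longleftrightarrow> graphic_closure G n B = B"
proof
  assume lf: "lift_flat G n (insert None (Some ` B))"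
  have "f \<in> B" if f: "f \<in> gedges G" and j: "joined_by G n B f" for f
  proof (rule ccontr)
    assume "f \<notin> B"
    then have "Some f \<in> lift_ground G - insert None (Some ` B)"
      using f unfolding lift_ground_def by auto
    then have "lift_rank G n (insert None (Some ` B)) <
        lift_rank G n (insert (Some f) (insert None (Some ` B)))"
      using lf unfolding lift_flat_def by blast
    moreover have "insert (Some f) (insert None (Some ` B)) = insert None (Some ` insert f B)"
      by auto
    ultimately show False using ecomp_insert_joined[OF j] lift_rank_insert_None[of G n "insert f B"]
      by (simp add: lift_rank_insert_None)
  qed
  then show "graphic_closure G n B = B"
    using subset_graphic_closure[OF gg BE] unfolding graphic_closure_def by blast
next
  assume cl: "graphic_closure G n B = B"
  show "lift_flat G n (insert None (Some ` B))" unfolding lift_flat_def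
  proof (intro conjI ballI)
    show "insert None (Some ` B) \<subseteq> lift_ground G" by (rule insert_None_subset_lift_ground[OF BE])
    fix x assume "x \<in> lift_ground G - insert None (Some ` B)"
    then obtain f where f: "x = Some f" "f \<in> gedges G" "f \<notin> B" unfolding lift_ground_def by auto
    then have "\<not> joined_by G n B f" using cl unfolding graphic_closure_def by blast
    then have "n - ecomp G n (insert f B) = n - ecomp G n B + 1"
      using graphic_rank_insert[OF gg f(2), of B] by simp
    moreover have "insert x (insert None (Some ` B)) = insert None (Some ` insert f B)" using f by auto
    ultimately show "lift_rank G n (insert None (Some ` B)) <
        lift_rank G n (insert x (insert None (Some ` B)))"
      using lift_rank_insert_None[of G n "insert f B"] by (simp add: lift_rank_insert_None)
  qed
qed

lemma lift_ground_in_trunc_lattice: "lift_ground G \<in> trunc_lattice G n d"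
  unfolding trunc_lattice_def by simp

lemma empty_in_trunc_lattice:
  assumes gg: "gain_graph n G"
  shows "{} \<in> trunc_lattice G n d"
proof -
  have "balanced_flat G n {}"
    unfolding balanced_flat_def using balanced_empty joined_by_empty[OF gg] by auto
  then have "lift_flat G n (Some ` {})" using lift_flat_Some_iff[OF gg] by blast
  moreover have "lift_rank G n (Some ` {}) = 0"
    using lift_rank_Some[of G n "{}"] balanced_empty by (simp add: ecomp_empty)
  ultimately show ?thesis unfolding trunc_lattice_def by simp
qed

section \<open>The projective lattice\<close>

lemma Inter_Hfam_Xof: "x \<in> proj_lattice G Q \<Longrightarrow> \<Inter> (Hfam G Q ` Xof G Q x) = x"
  unfolding proj_lattice_def Xof_def by blast

lemma proj_general_position_iff_image:
  "proj_general_position G n (Q :: nat \<Rightarrow> 'a::euclidean_space) \<longleftrightarrow>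
    Xof G Q ` proj_lattice G Q = trunc_lattice G n DIM('a)"
proof -
  have "inj_on (Xof G Q) (proj_lattice G Q)"
    by (rule inj_on_inverseI[where g = "\<lambda>S. \<Inter> (Hfam G Q ` S)"]) (rule Inter_Hfam_Xof)
  moreover have "y \<subseteq> x \<longleftrightarrow> Xof G Q x \<subseteq> Xof G Q y"
    if "x \<in> proj_lattice G Q" "y \<in> proj_lattice G Q" for x y
  proof
    show "y \<subseteq> x \<Longrightarrow> Xof G Q x \<subseteq> Xof G Q y" unfolding Xof_def by blast
    assume "Xof G Q x \<subseteq> Xof G Q y"
    then have "\<Inter> (Hfam G Q ` Xof G Q y) \<subseteq> \<Inter> (Hfam G Q ` Xof G Q x)" by blast
    then show "y \<subseteq> x" using Inter_Hfam_Xof[OF that(1)] Inter_Hfam_Xof[OF that(2)] by simp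
  qed
  ultimately show ?thesis unfolding proj_general_position_def bij_betw_def by blast
qed

lemma Xof_homog_flat:
  assumes nz: "\<forall>e\<in>gedges G. edge_normal G Q e \<noteq> 0" and ne: "\<Inter> (hyp G Q ` B) \<noteq> {}"
  shows "Xof G Q (homog_flat G Q B) = Some ` Eof G Q (\<Inter> (hyp G Q ` B))"
proof (rule set_eqI)
  fix a
  show "a \<in> Xof G Q (homog_flat G Q B) \<longleftrightarrow> a \<in> Some ` Eof G Q (\<Inter> (hyp G Q ` B))"
  proof (cases a)
    case None
    then show ?thesis using homog_flat_not_subset_h_inf[OF ne] unfolding Xof_def Hfam_def by auto
  next
    case (Some e)
    show ?thesis
    proof (cases "e \<in> gedges G")
      case True
      then have "Hfam G Q a = homog_flat G Q {e}"
        using Some nz hP_eq_homog_flat[of G Q e] unfolding Hfam_def by simp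
      then show ?thesis using Some True homog_flat_subset_iff[OF ne, of e]
        unfolding Xof_def Eof_def lift_ground_def by auto
    qed (use Some in \<open>auto simp: Xof_def Eof_def lift_ground_def\<close>)
  qed
qed

lemma Xof_ideal_flat:
  assumes nz: "\<forall>e\<in>gedges G. edge_normal G Q e \<noteq> 0"
  shows "Xof G Q (ideal_flat G Q B) =
    insert None (Some ` {e \<in> gedges G. edge_normal G Q e \<in> span (edge_normal G Q ` B)})"
proof (rule set_eqI)
  fix a
  show "a \<in> Xof G Q (ideal_flat G Q B) \<longleftrightarrow>
    a \<in> insert None (Some ` {e \<in> gedges G. edge_normal G Q e \<in> span (edge_normal G Q ` B)})"
  proof (cases a)
    case None
    then show ?thesis
      using ideal_flat_subset_h_inf unfolding Xof_def Hfam_def lift_ground_def by auto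
  next
    case (Some e)
    show ?thesis
    proof (cases "e \<in> gedges G")
      case True
      then have "Hfam G Q a = homog_flat G Q {e}"
        using Some nz hP_eq_homog_flat[of G Q e] unfolding Hfam_def by simp
      then show ?thesis using Some True ideal_flat_subset_homog_flat_iff[of G Q B e]
        unfolding Xof_def lift_ground_def by auto
    qed (use Some in \<open>auto simp: Xof_def lift_ground_def\<close>)
  qed
qed

lemma homog_flat_in_proj_lattice:
  assumes nz: "\<forall>e\<in>gedges G. edge_normal G Q e \<noteq> 0" and BE: "B \<subseteq> gedges G"
  shows "homog_flat G Q B \<in> proj_lattice G Q"
proof -
  have "\<Inter> (Hfam G Q ` (Some ` B)) = homog_flat G Q B"
    using Inter_Hfam_eq[OF nz Some_subset_lift_ground[OF BE]] by (simp add: image_iff)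
  then show ?thesis unfolding proj_lattice_def using Some_subset_lift_ground[OF BE] by blast
qed

lemma ideal_flat_in_proj_lattice:
  assumes nz: "\<forall>e\<in>gedges G. edge_normal G Q e \<noteq> 0" and BE: "B \<subseteq> gedges G"
  shows "ideal_flat G Q B \<in> proj_lattice G Q"
proof -
  have "\<Inter> (Hfam G Q ` (insert None (Some ` B))) = ideal_flat G Q B"
    using Inter_Hfam_eq[OF nz insert_None_subset_lift_ground[OF BE]] by (simp add: image_iff)
  then show ?thesis unfolding proj_lattice_def using insert_None_subset_lift_ground[OF BE] by blast
qed

lemma proj_lattice_cases:
  assumes nz: "\<forall>e\<in>gedges G. edge_normal G Q e \<noteq> 0" and x: "x \<in> proj_lattice G Q"
  obtains (ideal) B where "B \<subseteq> gedges G" "x = ideal_flat G Q B"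
  | (affine) B where "B \<subseteq> gedges G" "x = homog_flat G Q B" "\<Inter> (hyp G Q ` B) \<noteq> {}"
proof -
  obtain A where A: "A \<subseteq> lift_ground G" "x = \<Inter> (Hfam G Q ` A)"
    using x unfolding proj_lattice_def by blast
  let ?B = "{e. Some e \<in> A}"
  have BE: "?B \<subseteq> gedges G" by (rule lift_ground_subset_cases(1)[OF A(1)])
  have xe: "x = (if None \<in> A then ideal_flat G Q ?B else homog_flat G Q ?B)"
    using Inter_Hfam_eq[OF nz A(1)] A(2) by simp
  show ?thesis
  proof (cases "None \<in> A \<or> \<Inter> (hyp G Q ` ?B) = {}")
    case True
    then have "x = ideal_flat G Q ?B" using xe homog_flat_eq_ideal_flat[of G Q ?B] by auto
    with BE that(1) show ?thesis by blast
  next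
    case False
    with xe BE that(2) show ?thesis by auto
  qed
qed

section \<open>Affine and projective general position\<close>

lemma Some_image_in_trunc_lattice_iff:
  assumes gg: "gain_graph n G"
  shows "Some ` B \<in> trunc_lattice G n d \<longleftrightarrow> balanced_flat G n B \<and> n - ecomp G n B \<le> d"
proof -
  have "Some ` B \<noteq> lift_ground G" unfolding lift_ground_def by auto
  then have "Some ` B \<in> trunc_lattice G n d \<longleftrightarrow>
      lift_flat G n (Some ` B) \<and> lift_rank G n (Some ` B) \<le> d"
    unfolding trunc_lattice_def by blast
  also have "\<dots> \<longleftrightarrow> balanced_flat G n B \<and> n - ecomp G n B \<le> d"
    using lift_flat_Some_iff[OF gg, of B] lift_rank_Some[of G n B]
    unfolding balanced_flat_def by auto
  finally show ?thesis .
qed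

lemma Xof_homog_flat_Eof:
  assumes nz: "\<forall>e\<in>gedges G. edge_normal G Q e \<noteq> 0" and s: "s \<in> arr_lattice G Q"
  shows "Xof G Q (homog_flat G Q (Eof G Q s)) = Some ` Eof G Q s"
  using Xof_homog_flat[OF nz] Inter_hyp_Eof[OF s] arr_lattice_nonempty[OF s] by simp

lemma Xof_ideal_flat_in_trunc_lattice:
  fixes Q :: "nat \<Rightarrow> 'a::euclidean_space"
  assumes gg: "gain_graph n G" and gp: "general_position G n Q" and BE: "B \<subseteq> gedges G"
  shows "Xof G Q (ideal_flat G Q B) \<in> trunc_lattice G n DIM('a)"
proof -
  have nz: "\<forall>e\<in>gedges G. edge_normal G Q e \<noteq> 0"
    using general_position_normal_nonzero[OF gg gp] by blast
  show ?thesis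
  proof (cases "n - ecomp G n B < DIM('a)")
    case True
    let ?K = "graphic_closure G n B"
    have "Xof G Q (ideal_flat G Q B) = insert None (Some ` ?K)"
      unfolding Xof_ideal_flat[OF nz] graphic_closure_def
      using general_position_normal_in_span_iff[OF gg gp BE _ True] by blast
    moreover have "conn {1..n} (gends G ` ?K) = conn {1..n} (gends G ` B)"
      by (rule conn_graphic_closure[OF gg BE])
    then have "lift_flat G n (insert None (Some ` ?K))" and "ecomp G n ?K = ecomp G n B"
      using lift_flat_insert_None_iff[OF gg] ecomp_cong by (auto simp: graphic_closure_def)
    ultimately show ?thesis
      using True unfolding trunc_lattice_def by (simp add: lift_rank_insert_None)
  next
    case False
    then have "dim (edge_normal G Q ` B) = DIM('a)"
      using general_position_dim_normals[OF gg gp BE] by simp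
    then have "span (edge_normal G Q ` B) = UNIV" using dim_eq_full by blast
    then have "Xof G Q (ideal_flat G Q B) = lift_ground G"
      unfolding Xof_ideal_flat[OF nz] lift_ground_def by simp
    then show ?thesis using lift_ground_in_trunc_lattice by simp
  qed
qed

lemma general_position_Xof_in_trunc_lattice:
  fixes Q :: "nat \<Rightarrow> 'a::euclidean_space"
  assumes gg: "gain_graph n G" and gp: "general_position G n Q" and x: "x \<in> proj_lattice G Q"
  shows "Xof G Q x \<in> trunc_lattice G n DIM('a)"
proof -
  have nz: "\<forall>e\<in>gedges G. edge_normal G Q e \<noteq> 0"
    using general_position_normal_nonzero[OF gg gp] by blast
  from nz x show ?thesis
  proof (cases rule: proj_lattice_cases)
    case (ideal B)
    then show ?thesis using Xof_ideal_flat_in_trunc_lattice[OF gg gp] by simp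
  next
    case (affine B)
    let ?s = "\<Inter> (hyp G Q ` B)"
    have "?s \<in> arr_lattice G Q" unfolding arr_lattice_def using affine by blast
    then have "balanced_flat G n (Eof G Q ?s) \<and> n - ecomp G n (Eof G Q ?s) \<le> DIM('a)"
      using gp unfolding general_position_iff_image by blast
    moreover have "Xof G Q x = Some ` Eof G Q ?s" using affine Xof_homog_flat[OF nz] by simp
    ultimately show ?thesis using Some_image_in_trunc_lattice_iff[OF gg] by simp
  qed
qed

lemma general_position_ideal_flat_realized:
  fixes Q :: "nat \<Rightarrow> 'a::euclidean_space"
  assumes gg: "gain_graph n G" and gp: "general_position G n Q" and BE: "B \<subseteq> gedges G"
    and lf: "lift_flat G n (insert None (Some ` B))"
    and rk: "lift_rank G n (insert None (Some ` B)) \<le> DIM('a)"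
  shows "insert None (Some ` B) \<in> Xof G Q ` proj_lattice G Q"
proof -
  have nz: "\<forall>e\<in>gedges G. edge_normal G Q e \<noteq> 0"
    using general_position_normal_nonzero[OF gg gp] by blast
  have cl: "graphic_closure G n B = B" using lift_flat_insert_None_iff[OF gg BE] lf by simp
  have "n - ecomp G n B < DIM('a)" using rk by (simp add: lift_rank_insert_None)
  then have "{e \<in> gedges G. edge_normal G Q e \<in> span (edge_normal G Q ` B)} = B"
    using general_position_normal_in_span_iff[OF gg gp BE] cl unfolding graphic_closure_def by blast
  then have "Xof G Q (ideal_flat G Q B) = insert None (Some ` B)"
    unfolding Xof_ideal_flat[OF nz] by simp
  then show ?thesis using ideal_flat_in_proj_lattice[OF nz BE] by blast
qed

lemma general_position_affine_flat_realized:
  fixes Q :: "nat \<Rightarrow> 'a::euclidean_space"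
  assumes gg: "gain_graph n G" and gp: "general_position G n Q"
    and B: "balanced_flat G n B" "n - ecomp G n B \<le> DIM('a)"
  shows "Some ` B \<in> Xof G Q ` proj_lattice G Q"
proof -
  have nz: "\<forall>e\<in>gedges G. edge_normal G Q e \<noteq> 0"
    using general_position_normal_nonzero[OF gg gp] by blast
  have BE: "B \<subseteq> gedges G" using B(1) unfolding balanced_flat_def balanced_def by blast
  have "B \<in> Eof G Q ` arr_lattice G Q" using gp B unfolding general_position_iff_image by simp
  then obtain s where s: "s \<in> arr_lattice G Q" "Eof G Q s = B" by blast
  then have "Xof G Q (homog_flat G Q B) = Some ` B" using Xof_homog_flat_Eof[OF nz s(1)] by simp
  then show ?thesis using homog_flat_in_proj_lattice[OF nz BE] by (metis image_eqI)
qed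

lemma lift_ground_in_Xof_image: "lift_ground G \<in> Xof G Q ` proj_lattice G Q"
proof -
  have "\<Inter> (Hfam G Q ` lift_ground G) \<in> proj_lattice G Q" unfolding proj_lattice_def by blast
  moreover have "Xof G Q (\<Inter> (Hfam G Q ` lift_ground G)) = lift_ground G" unfolding Xof_def by blast
  ultimately show ?thesis by (metis image_eqI)
qed

lemma general_position_trunc_lattice_realized:
  fixes Q :: "nat \<Rightarrow> 'a::euclidean_space"
  assumes gg: "gain_graph n G" and gp: "general_position G n Q"
    and F: "F \<in> trunc_lattice G n DIM('a)"
  shows "F \<in> Xof G Q ` proj_lattice G Q"
proof (cases "F = lift_ground G")
  case False
  then have flat: "lift_flat G n F" "lift_rank G n F \<le> DIM('a)"
    using F unfolding trunc_lattice_def by auto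
  let ?B = "{e. Some e \<in> F}"
  have FG: "F \<subseteq> lift_ground G" using flat(1) unfolding lift_flat_def by blast
  have BE: "?B \<subseteq> gedges G" by (rule lift_ground_subset_cases(1)[OF FG])
  show ?thesis
  proof (cases "None \<in> F")
    case True
    then have "F = insert None (Some ` ?B)" using lift_ground_subset_cases(2)[OF FG] by simp
    with flat show ?thesis using general_position_ideal_flat_realized[OF gg gp BE] by simp
  next
    case False
    then have Fe: "F = Some ` ?B" using lift_ground_subset_cases(2)[OF FG] by simp
    then have "balanced_flat G n ?B \<and> n - ecomp G n ?B \<le> DIM('a)"
      using Some_image_in_trunc_lattice_iff[OF gg] F by (metis (no_types, lifting))
    then have "Some ` ?B \<in> Xof G Q ` proj_lattice G Q"
      using general_position_affine_flat_realized[OF gg gp] by blast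
    then show ?thesis using Fe by metis
  qed
qed (simp add: lift_ground_in_Xof_image)

lemma general_position_imp_proj:
  fixes Q :: "nat \<Rightarrow> 'a::euclidean_space"
  assumes gg: "gain_graph n G" and gp: "general_position G n Q"
  shows "proj_general_position G n Q"
  unfolding proj_general_position_iff_image
  using general_position_Xof_in_trunc_lattice[OF gg gp] general_position_trunc_lattice_realized[OF gg gp]
  by blast

text \<open>A vanishing normal makes the hyperplane of e either everything or empty. In the first case no
  projective intersection realizes the empty flat; in the second the closure of e is the
  origin of the homogeneous coordinates, which lies on the ideal hyperplane, so no projective
  intersection realizes the rank-one flat spanned by e.\<close>

lemma proj_general_position_normal_nonzero:
  fixes Q :: "nat \<Rightarrow> 'a::euclidean_space"
  assumes gg: "gain_graph n G" and pgp: "proj_general_position G n Q" and e: "e \<in> gedges G"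
  shows "edge_normal G Q e \<noteq> 0"
proof
  assume z: "edge_normal G Q e = 0"
  have img: "Xof G Q ` proj_lattice G Q = trunc_lattice G n DIM('a)"
    using pgp proj_general_position_iff_image by blast
  have eg: "Some e \<in> lift_ground G" using e unfolding lift_ground_def by simp
  show False
  proof (cases "edge_offset G Q e = 0")
    case True
    then have "hyp G Q e = UNIV" unfolding hyp_eq z by simp
    then have "hP G Q e = UNIV" by (rule hP_UNIV)
    then have "Some e \<in> Xof G Q x" for x unfolding Xof_def Hfam_def using eg by simp
    moreover have "{} \<in> Xof G Q ` proj_lattice G Q" unfolding img by (rule empty_in_trunc_lattice[OF gg])
    ultimately show False by auto
  next
    case False
    then have "hyp G Q e = {}" unfolding hyp_eq z by simp
    then have h0: "hP G Q e = {0}" unfolding hP_def by simp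
    obtain F where F: "{e} \<subseteq> F" "balanced_flat G n F"
        "conn {1..n} (gends G ` F) = conn {1..n} (gends G ` {e})"
      using balanced_extends_to_flat[OF gg balanced_singleton[OF e]] .
    have "n - ecomp G n F \<le> DIM('a)"
      using ecomp_cong[OF F(3)] ecomp_singleton[OF gg e] DIM_positive[where 'a='a] by linarith
    then have "Some ` F \<in> Xof G Q ` proj_lattice G Q"
      unfolding img using Some_image_in_trunc_lattice_iff[OF gg] F(2) by blast
    then obtain x where x: "Xof G Q x = Some ` F" by blast
    then have "Some e \<in> Xof G Q x" using F(1) by blast
    then have "x \<subseteq> {0}" using h0 unfolding Xof_def Hfam_def by simp
    then have "None \<in> Xof G Q x" unfolding Xof_def Hfam_def h_inf_def lift_ground_def by auto
    with x show False by auto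
  qed
qed

lemma proj_general_position_Eof_flat:
  fixes Q :: "nat \<Rightarrow> 'a::euclidean_space"
  assumes gg: "gain_graph n G" and pgp: "proj_general_position G n Q" and s: "s \<in> arr_lattice G Q"
  shows "balanced_flat G n (Eof G Q s) \<and> n - ecomp G n (Eof G Q s) \<le> DIM('a)"
proof -
  have nz: "\<forall>e\<in>gedges G. edge_normal G Q e \<noteq> 0"
    using proj_general_position_normal_nonzero[OF gg pgp] by blast
  have "Eof G Q s \<subseteq> gedges G" unfolding Eof_def by blast
  then have "Xof G Q (homog_flat G Q (Eof G Q s)) \<in> Xof G Q ` proj_lattice G Q"
    using homog_flat_in_proj_lattice[OF nz] by blast
  then have "Some ` Eof G Q s \<in> trunc_lattice G n DIM('a)"
    using pgp Xof_homog_flat_Eof[OF nz s] unfolding proj_general_position_iff_image by simp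
  then show ?thesis using Some_image_in_trunc_lattice_iff[OF gg] by blast
qed

lemma proj_general_position_flat_realized:
  fixes Q :: "nat \<Rightarrow> 'a::euclidean_space"
  assumes gg: "gain_graph n G" and pgp: "proj_general_position G n Q"
    and B: "balanced_flat G n B" "n - ecomp G n B \<le> DIM('a)"
  shows "B \<in> Eof G Q ` arr_lattice G Q"
proof -
  have nz: "\<forall>e\<in>gedges G. edge_normal G Q e \<noteq> 0"
    using proj_general_position_normal_nonzero[OF gg pgp] by blast
  have "Some ` B \<in> Xof G Q ` proj_lattice G Q"
    using pgp B Some_image_in_trunc_lattice_iff[OF gg] unfolding proj_general_position_iff_image
    by blast
  then obtain x where x: "x \<in> proj_lattice G Q" "Xof G Q x = Some ` B" by blast
  from nz x(1) show ?thesis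
  proof (cases rule: proj_lattice_cases)
    case (ideal B')
    then have "None \<in> Xof G Q x" using Xof_ideal_flat[OF nz] by simp
    with x(2) show ?thesis by auto
  next
    case (affine B')
    let ?s = "\<Inter> (hyp G Q ` B')"
    have "Some ` Eof G Q ?s = Some ` B" using Xof_homog_flat[OF nz] affine x(2) by simp
    then have "Eof G Q ?s = B" by (simp add: inj_image_eq_iff)
    moreover have "?s \<in> arr_lattice G Q" unfolding arr_lattice_def using affine by blast
    ultimately show ?thesis by blast
  qed
qed

lemma proj_general_position_imp_general:
  fixes Q :: "nat \<Rightarrow> 'a::euclidean_space"
  assumes gg: "gain_graph n G" and pgp: "proj_general_position G n Q"
  shows "general_position G n Q"
  unfolding general_position_iff_image
  using proj_general_position_Eof_flat[OF gg pgp] proj_general_position_flat_realized[OF gg pgp]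
  by blast

lemma general_position_iff_proj:
  "gain_graph n G \<Longrightarrow> general_position G n Q \<longleftrightarrow> proj_general_position G n Q"
  using general_position_imp_proj proj_general_position_imp_general by blast

section \<open>Ideal general position\<close>

lemma ncomp_star:
  assumes "finite V" "m \<in> V" "J \<subseteq> V - {m}"
  shows "ncomp V ((\<lambda>j. (m, j)) ` J) + card J = card V"
proof -
  have "finite J" using assms finite_subset by blast
  then show ?thesis using assms(3)
  proof (induction J rule: finite_induct)
    case empty then show ?case by (simp add: ncomp_empty)
  next
    case (insert j J)
    then have j: "j \<in> V" "j \<noteq> m" by auto
    have "\<not> conn V ((\<lambda>j. (m, j)) ` J) m j"
    proof
      assume "conn V ((\<lambda>j. (m, j)) ` J) m j"
      from conn_last_step[OF this] j(2) insert.hyps(2) show False by auto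
    qed
    then have "ncomp V (insert (m, j) ((\<lambda>j. (m, j)) ` J)) + 1 = ncomp V ((\<lambda>j. (m, j)) ` J)"
      using ncomp_insert_nconn assms(1,2) j(1) by blast
    with insert show ?case by simp
  qed
qed

lemma ideal_general_position_dim:
  fixes Q :: "nat \<Rightarrow> 'a::euclidean_space"
  assumes "ideal_general_position n Q" "T \<subseteq> {(i, j). i \<in> {1..n} \<and> j \<in> {1..n} \<and> i < j}"
  shows "dim ((\<lambda>(i, j). Q j - Q i) ` T) = min (n - ncomp {1..n} T) DIM('a)"
  using assms unfolding ideal_general_position_def by blast

lemma ideal_general_position_dim_star:
  fixes Q :: "nat \<Rightarrow> 'a::euclidean_space"
  assumes igp: "ideal_general_position n Q"
    and m: "m \<in> {1..n}" and J: "J \<subseteq> {1..n}" "\<forall>j\<in>J. m < j"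
  shows "dim ((\<lambda>j. Q j - Q m) ` J) = min (card J) DIM('a)"
proof -
  let ?T = "(\<lambda>j. (m, j)) ` J"
  have "?T \<subseteq> {(i, j). i \<in> {1..n} \<and> j \<in> {1..n} \<and> i < j}" using m J by auto
  then have "dim ((\<lambda>(i, j). Q j - Q i) ` ?T) = min (n - ncomp {1..n} ?T) DIM('a)"
    by (rule ideal_general_position_dim[OF igp])
  moreover have "J \<subseteq> {1..n} - {m}" using J by auto
  then have "ncomp {1..n} ?T + card J = n" using ncomp_star[of "{1..n}"] m by simp
  moreover have "(\<lambda>(i, j). Q j - Q i) ` ?T = (\<lambda>j. Q j - Q m) ` J" by auto
  ultimately show ?thesis by simp
qed

text \<open>The points of a set I of at most d+1 indices are affinely independent because the
  differences from the point of least index are the ideal points of the star at that index,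
  whose graphic rank is the number of remaining points.\<close>

lemma ideal_general_position_imp_simple_position:
  fixes Q :: "nat \<Rightarrow> 'a::euclidean_space"
  assumes igp: "ideal_general_position n Q"
  shows "simple_position n Q"
  unfolding simple_position_def
proof (intro allI impI conjI)
  fix I assume I: "I \<subseteq> {1..n}" and cI: "card I \<le> DIM('a) + 1"
  have inj: "inj_on Q {1..n}" using igp unfolding ideal_general_position_def by blast
  then show "inj_on Q I" using I inj_on_subset by blast
  have finI: "finite I" using I finite_subset by blast
  show "\<not> affine_dependent (Q ` I)"
  proof (cases "I = {}")
    case False
    define m where "m = Min I"
    have mI: "m \<in> I" and mle: "\<And>j. j \<in> I \<Longrightarrow> m \<le> j"
      using finI False unfolding m_def by auto
    define J where "J = I - {m}"
    have finJ: "finite J" and cJ: "card J + 1 = card I"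
      using finI mI card_gt_0_iff[of I] unfolding J_def by auto
    let ?S = "(\<lambda>j. Q j - Q m) ` J"
    have "m \<in> {1..n}" "J \<subseteq> {1..n}" "\<forall>j\<in>J. m < j"
      using I mI mle unfolding J_def by (auto simp: order.order_iff_strict)
    then have dimS: "dim ?S = card J"
      using ideal_general_position_dim_star[OF igp] cI cJ by simp
    have "card ?S \<le> card J" by (rule card_image_le[OF finJ])
    moreover have "dim ?S \<le> card ?S" using dim_le_card[OF span_superset finite_imageI[OF finJ]] .
    ultimately have "card ?S = dim ?S" using dimS by linarith
    moreover have "?S \<subseteq> span ?S" by (rule span_superset)
    ultimately have indep: "independent ?S" using card_eq_dim[OF subset_refl] finJ by blast
    have notin: "Q m \<notin> Q ` J"
    proof
      assume "Q m \<in> Q ` J"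
      then obtain j where j: "j \<in> J" "Q j = Q m" by auto
      then have "j \<in> {1..n}" "j \<noteq> m" using I unfolding J_def by auto
      then show False using inj_onD[OF inj j(2)] mI I by auto
    qed
    have "Q ` I = insert (Q m) (Q ` J)" using mI unfolding J_def by blast
    moreover have "(\<lambda>x. - Q m + x) ` (Q ` J) = ?S" by auto
    ultimately show ?thesis using indep affine_dependent_iff_dependent[OF notin] by simp
  qed simp
qed

lemma conn_cong_symmetric_closure:
  "R \<union> R\<inverse> = R' \<union> R'\<inverse> \<Longrightarrow> conn V R = conn V R'"
  unfolding conn_def[abs_def] by simp

lemma conn_joins_image:
  assumes "\<forall>p\<in>T. joins G (f p) (fst p) (snd p)"
  shows "conn V (gends G ` f ` T) = conn V T"
proof (rule conn_cong_symmetric_closure)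
  have "gends G ` f ` T \<subseteq> T \<union> T\<inverse>" using assms unfolding joins_def by force
  moreover have "T \<subseteq> gends G ` f ` T \<union> (gends G ` f ` T)\<inverse>"
  proof
    fix p assume "p \<in> T"
    with assms have "gends G (f p) = p \<or> gends G (f p) = (snd p, fst p)" unfolding joins_def by auto
    with \<open>p \<in> T\<close> show "p \<in> gends G ` f ` T \<union> (gends G ` f ` T)\<inverse>"
      by (cases p) (auto intro: rev_image_eqI)
  qed
  ultimately show "gends G ` f ` T \<union> (gends G ` f ` T)\<inverse> = T \<union> T\<inverse>" by blast
qed

lemma span_normals_joins_image:
  assumes "\<forall>p\<in>T. joins G (f p) (fst p) (snd p)"
  shows "span (edge_normal G Q ` f ` T) = span ((\<lambda>(i, j). Q j - Q i) ` T)"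
proof -
  have pm: "edge_normal G Q (f p) = Q (snd p) - Q (fst p) \<or>
      edge_normal G Q (f p) = - (Q (snd p) - Q (fst p))" if "p \<in> T" for p
    using assms that unfolding joins_def edge_normal_def by auto
  have "edge_normal G Q ` f ` T \<subseteq> span ((\<lambda>(i, j). Q j - Q i) ` T)"
  proof
    fix x assume "x \<in> edge_normal G Q ` f ` T"
    then obtain p where p: "p \<in> T" "x = edge_normal G Q (f p)" by blast
    have b: "Q (snd p) - Q (fst p) \<in> span ((\<lambda>(i, j). Q j - Q i) ` T)"
      using p(1) by (intro span_base) (auto intro: rev_image_eqI)
    then have "- (Q (snd p) - Q (fst p)) \<in> span ((\<lambda>(i, j). Q j - Q i) ` T)" by (rule span_neg)
    with b pm[OF p(1)] p(2) show "x \<in> span ((\<lambda>(i, j). Q j - Q i) ` T)" by auto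
  qed
  moreover have "(\<lambda>(i, j). Q j - Q i) ` T \<subseteq> span (edge_normal G Q ` f ` T)"
  proof
    fix x assume "x \<in> (\<lambda>(i, j). Q j - Q i) ` T"
    then obtain p where p: "p \<in> T" "x = Q (snd p) - Q (fst p)" by auto
    have b: "edge_normal G Q (f p) \<in> span (edge_normal G Q ` f ` T)"
      using p(1) by (intro span_base) blast
    then have "- edge_normal G Q (f p) \<in> span (edge_normal G Q ` f ` T)" by (rule span_neg)
    with b pm[OF p(1)] p(2) show "x \<in> span (edge_normal G Q ` f ` T)" by auto
  qed
  ultimately show ?thesis by (simp only: span_eq)
qed

text \<open>In a complete gain graph every pair of vertices is an edge, so the rank of a set of
  ideal points is the rank of a set of edge normals.\<close>

lemma complete_general_position_imp_ideal:
  fixes Q :: "nat \<Rightarrow> 'a::euclidean_space"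
  assumes gg: "gain_graph n G" and cp: "complete_gg n G" and gp: "general_position G n Q"
  shows "ideal_general_position n Q"
  unfolding ideal_general_position_def
proof (intro conjI allI impI)
  show "inj_on Q {1..n}"
  proof (rule inj_onI, rule ccontr)
    fix i j assume ij: "i \<in> {1..n}" "j \<in> {1..n}" "Q i = Q j" "i \<noteq> j"
    then obtain e where e: "e \<in> gedges G" "joins G e i j" using cp unfolding complete_gg_def by blast
    then have "edge_normal G Q e = 0" using ij unfolding joins_def edge_normal_def by auto
    with general_position_normal_nonzero[OF gg gp e(1)] show False by blast
  qed
next
  fix T assume T: "T \<subseteq> {(i, j). i \<in> {1..n} \<and> j \<in> {1..n} \<and> i < j}"
  have "\<exists>e. e \<in> gedges G \<and> joins G e (fst p) (snd p)" if "p \<in> T" for p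
  proof -
    have "fst p \<in> {1..n}" "snd p \<in> {1..n}" "fst p \<noteq> snd p" using that T by auto
    then show ?thesis using cp unfolding complete_gg_def by blast
  qed
  then have "\<forall>p\<in>T. \<exists>e. e \<in> gedges G \<and> joins G e (fst p) (snd p)" by blast
  then obtain f where f: "\<forall>p\<in>T. f p \<in> gedges G \<and> joins G (f p) (fst p) (snd p)"
    by (rule bchoice[THEN exE])
  have "conn {1..n} (gends G ` f ` T) = conn {1..n} T"
    using f by (intro conn_joins_image) blast
  then have c: "ecomp G n (f ` T) = ncomp {1..n} T" unfolding ecomp_def by (rule ncomp_cong)
  have "span (edge_normal G Q ` f ` T) = span ((\<lambda>(i, j). Q j - Q i) ` T)"
    using f span_normals_joins_image[of T G f Q] by blast
  then have "dim ((\<lambda>(i, j). Q j - Q i) ` T) = dim (edge_normal G Q ` f ` T)"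
    using dim_span[of "edge_normal G Q ` f ` T"] dim_span[of "(\<lambda>(i, j). Q j - Q i) ` T"] by simp
  also have "\<dots> = min (n - ecomp G n (f ` T)) DIM('a)"
    using general_position_dim_normals[OF gg gp] f by blast
  finally show "dim ((\<lambda>(i, j). Q j - Q i) ` T) = min (n - ncomp {1..n} T) DIM('a)"
    unfolding c .
qed

section \<open>Incomplete graphs in general position\<close>

lemma general_position_no_edges:
  assumes "gedges G = {}"
  shows "general_position G n (Q :: nat \<Rightarrow> 'a::euclidean_space)"
proof -
  have "arr_lattice G Q = {UNIV}" using assms unfolding arr_lattice_def by auto
  moreover have "Eof G Q UNIV = {}" using assms unfolding Eof_def by simp
  moreover have "balanced_flat G n S \<longleftrightarrow> S = {}" for S
    using assms balanced_empty unfolding balanced_flat_def balanced_def by auto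
  ultimately show ?thesis unfolding general_position_iff_image by (auto simp: ecomp_empty)
qed

definition edgeless_graph :: "nat gain_graph" where
  "edgeless_graph = \<lparr>gedges = {}, gends = (\<lambda>_. (1, 2)), ggain = (\<lambda>_. 0)\<rparr>"

lemma disconnected_general_not_ideal:
  "\<exists>(n'::nat) (G'::nat gain_graph) (Q'::nat \<Rightarrow> 'a::euclidean_space).
     gain_graph n' G' \<and> disconnected_gg n' G' \<and> general_position G' n' Q' \<and> \<not> ideal_general_position n' Q'"
proof (intro exI conjI)
  show "gain_graph 2 edgeless_graph" unfolding gain_graph_def edgeless_graph_def by simp
  show "disconnected_gg 2 edgeless_graph"
    unfolding disconnected_gg_def edgeless_graph_def by (simp add: ecomp_empty)
  show "general_position edgeless_graph 2 (\<lambda>_. 0 :: 'a)"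
    by (rule general_position_no_edges) (simp add: edgeless_graph_def)
  have "\<not> inj_on (\<lambda>_. 0 :: 'a) {1..2::nat}"
  proof
    assume "inj_on (\<lambda>_. 0 :: 'a) {1..2::nat}"
    from inj_onD[OF this, of 1 2] show False by simp
  qed
  then show "\<not> ideal_general_position 2 (\<lambda>_. 0 :: 'a)" unfolding ideal_general_position_def by blast
qed

text \<open>A path on d+2 vertices whose first and last points coincide. The consecutive differences
  are a basis b 1, ..., b d followed by minus their sum, and the gains are chosen so that the
  first d hyperplanes are the coordinate hyperplanes through the origin and the last one misses
  the origin; these d+1 hyperplanes are in general position.\<close>

definition path_points :: "(nat \<Rightarrow> 'a::euclidean_space) \<Rightarrow> nat \<Rightarrow> nat \<Rightarrow> 'a" where
  "path_points b d k = (if k = d + 2 then 0 else (\<Sum>i\<in>{1..<k}. b i))"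

definition path_offset :: "nat \<Rightarrow> nat \<Rightarrow> real" where
  "path_offset d k = (if k = d + 1 then 1 else 0)"

definition path_graph :: "(nat \<Rightarrow> 'a::euclidean_space) \<Rightarrow> nat \<Rightarrow> nat gain_graph" where
  "path_graph b d = \<lparr>gedges = {1..d+1}, gends = (\<lambda>k. (k, Suc k)),
     ggain = (\<lambda>k. 2 * path_offset d k + (norm (path_points b d k))\<^sup>2
                   - (norm (path_points b d (Suc k)))\<^sup>2)\<rparr>"

lemma path_graph_simps [simp]:
  "gedges (path_graph b d) = {1..d+1}" "gends (path_graph b d) = (\<lambda>k. (k, Suc k))"
  "ggain (path_graph b d) k = 2 * path_offset d k + (norm (path_points b d k))\<^sup>2 - (norm (path_points b d (Suc k)))\<^sup>2"
  unfolding path_graph_def by simp_all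

lemma path_gain_graph: "gain_graph (d + 2) (path_graph b d)"
  unfolding gain_graph_def by auto

lemma path_edge_offset: "edge_offset (path_graph b d) (path_points b d) k = path_offset d k"
  unfolding edge_offset_def by simp

lemma path_conn_cut:
  assumes "k \<notin> A" "conn V ((\<lambda>k. (k, Suc k)) ` A) i j"
  shows "i \<le> k \<longleftrightarrow> j \<le> k"
  using assms(2) unfolding conn_def
proof (induction rule: rtrancl_induct)
  case base then show ?case by simp
next
  case (step y z)
  then obtain m where m: "m \<in> A" "(y, z) = (m, Suc m) \<or> (z, y) = (m, Suc m)" by auto
  have "m \<noteq> k" using m(1) assms(1) by blast
  then have "y \<le> k \<longleftrightarrow> z \<le> k" using m(2) by auto
  then show ?case using step.IH by simp
qed

lemma path_conn_first:
  assumes "j \<in> {1..d+2}"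
  shows "conn {1..d+2} ((\<lambda>k. (k, Suc k)) ` {1..d+1}) 1 j"
  using assms
proof (induction j)
  case 0 then show ?case by simp
next
  case (Suc j)
  show ?case
  proof (cases "j = 0")
    case True then show ?thesis by simp
  next
    case False
    then have IH: "conn {1..d+2} ((\<lambda>k. (k, Suc k)) ` {1..d+1}) 1 j" using Suc by simp
    have "conn {1..d+2} ((\<lambda>k. (k, Suc k)) ` {1..d+1}) j (Suc j)"
      using False Suc.prems by (intro conn_edge) auto
    then show ?thesis using conn_trans[OF IH] by blast
  qed
qed

lemma path_ecomp_all: "ecomp (path_graph b d) (d + 2) {1..d+1} = 1"
proof -
  have "ncomp {1..d+2} ((\<lambda>k. (k, Suc k)) ` {1..d+1}) = 1"
  proof (rule ncomp_eq_1)
    show "{1..d+2} \<noteq> {}" by simp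
    fix u v assume "u \<in> {1..d + 2}" "v \<in> {1..d + 2}"
    then have "conn {1..d + 2} ((\<lambda>k. (k, Suc k)) ` {1..d + 1}) 1 u"
      "conn {1..d + 2} ((\<lambda>k. (k, Suc k)) ` {1..d + 1}) 1 v"
      using path_conn_first by blast+
    then show "conn {1..d + 2} ((\<lambda>k. (k, Suc k)) ` {1..d + 1}) u v"
      using conn_sym conn_trans by blast
  qed
  then show ?thesis unfolding ecomp_def by simp
qed

definition path_potential :: "(nat \<Rightarrow> 'a::euclidean_space) \<Rightarrow> nat \<Rightarrow> nat \<Rightarrow> real" where
  "path_potential b d k = 2 * (\<Sum>i\<in>{1..<k}. path_offset d i) - (norm (path_points b d k))\<^sup>2"

lemma path_gain_potential:
  "1 \<le> k \<Longrightarrow> ggain (path_graph b d) k = path_potential b d (Suc k) - path_potential b d k"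
  unfolding path_potential_def by (simp add: sum.atLeastLessThan_Suc)

lemma path_balanced:
  assumes "S \<subseteq> {1..d+1}"
  shows "balanced (path_graph b d) S"
  by (rule potential_balanced[where phi = "path_potential b d"]) (use assms path_gain_potential in auto)

lemma path_balanced_flats:
  "{S. balanced_flat (path_graph b d) (d + 2) S \<and> d + 2 - ecomp (path_graph b d) (d + 2) S \<le> d} =
   {A. A \<subseteq> {1..d+1} \<and> A \<noteq> {1..d+1}}"
proof (rule set_eqI, rule iffI)
  fix S assume "S \<in> {S. balanced_flat (path_graph b d) (d + 2) S \<and> d + 2 - ecomp (path_graph b d) (d + 2) S \<le> d}"
  then have S: "balanced_flat (path_graph b d) (d + 2) S" "d + 2 - ecomp (path_graph b d) (d + 2) S \<le> d" by simp_all
  have "S \<subseteq> {1..d+1}" using S(1) unfolding balanced_flat_def balanced_def by simp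
  moreover have "S \<noteq> {1..d+1}" using S(2) path_ecomp_all[of b d] by auto
  ultimately show "S \<in> {A. A \<subseteq> {1..d+1} \<and> A \<noteq> {1..d+1}}" by simp
next
  fix S assume "S \<in> {A. A \<subseteq> {1..d+1} \<and> A \<noteq> {1..d+1}}"
  then have S: "S \<subseteq> {1..d+1}" "S \<noteq> {1..d+1}" by simp_all
  have nc: "\<not> conn {1..d+2} ((\<lambda>k. (k, Suc k)) ` S) k (Suc k)" if "k \<notin> S" for k
  proof
    assume c: "conn {1..d+2} ((\<lambda>k. (k, Suc k)) ` S) k (Suc k)"
    from path_conn_cut[OF that c] show False by simp
  qed
  have bf: "balanced_flat (path_graph b d) (d + 2) S"
    unfolding balanced_flat_def using path_balanced[OF S(1)] nc by auto
  obtain k where k: "k \<in> {1..d+1}" "k \<notin> S" using S by blast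
  have "2 \<le> ncomp {1..d+2} ((\<lambda>k. (k, Suc k)) ` S)"
    by (rule ncomp_ge_2[OF _ _ _ nc[OF k(2)]]) (use k(1) in auto)
  then have "d + 2 - ecomp (path_graph b d) (d + 2) S \<le> d" unfolding ecomp_def by simp
  then show "S \<in> {S. balanced_flat (path_graph b d) (d + 2) S \<and> d + 2 - ecomp (path_graph b d) (d + 2) S \<le> d}"
    using bf by simp
qed

lemma path_separable: "1 \<le> d \<Longrightarrow> separable_gg (d + 2) (path_graph b d)"
  unfolding separable_gg_def
proof (intro bexI[of _ 2])
  assume d: "1 \<le> d"
  let ?R = "gends (path_graph b d) ` {e \<in> gedges (path_graph b d). \<not> (fst (gends (path_graph b d) e) = 2 \<or> snd (gends (path_graph b d) e) = 2)}"
  have n1: "1 \<notin> fst ` ?R \<union> snd ` ?R" by auto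
  have nc: "\<not> conn ({1..d+2} - {2}) ?R 3 1"
  proof
    assume "conn ({1..d+2} - {2}) ?R 3 1"
    from conn_last_step[OF this] n1 show False by simp
  qed
  show "2 \<le> ncomp ({1..d + 2} - {2}) ?R"
    by (rule ncomp_ge_2[OF _ _ _ nc]) (use d in auto)
  show "2 \<in> {1..d+2}" by simp
qed

lemma path_connected: "connected_gg (d + 2) (path_graph b d)"
  unfolding connected_gg_def using path_ecomp_all by simp

lemma path_not_ideal: "\<not> ideal_general_position (d + 2) (path_points b d)"
proof
  assume "ideal_general_position (d + 2) (path_points b d)"
  then have inj: "inj_on (path_points b d) {1..d+2}" unfolding ideal_general_position_def by blast
  have "path_points b d 1 = path_points b d (d + 2)" unfolding path_points_def by simp
  from inj_onD[OF inj this] show False by simp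
qed


context
  fixes b :: "nat \<Rightarrow> 'a::euclidean_space" and d :: nat
  assumes hb: "bij_betw b {1..d} Basis"
begin

lemma basis_inner: "i \<in> {1..d} \<Longrightarrow> j \<in> {1..d} \<Longrightarrow> b i \<bullet> b j = (if i = j then 1 else 0)"
proof -
  assume ij: "i \<in> {1..d}" "j \<in> {1..d}"
  have "b i \<in> Basis" "b j \<in> Basis" using bij_betwE[OF hb] ij by blast+
  moreover have "b i = b j \<longleftrightarrow> i = j" using inj_on_eq_iff[OF bij_betw_imp_inj_on[OF hb] ij] .
  ultimately show ?thesis using inner_Basis[of "b i" "b j"] by simp
qed

definition basis_sum :: 'a where "basis_sum = (\<Sum>i\<in>{1..d}. b i)"

lemma basis_sum_inner: "j \<in> {1..d} \<Longrightarrow> basis_sum \<bullet> b j = 1"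
proof -
  assume j: "j \<in> {1..d}"
  have "basis_sum \<bullet> b j = (\<Sum>i\<in>{1..d}. b i \<bullet> b j)" unfolding basis_sum_def by (simp add: inner_sum_left)
  also have "\<dots> = (\<Sum>i\<in>{1..d}. if i = j then 1 else 0)" by (rule sum.cong) (use j basis_inner in auto)
  also have "\<dots> = 1" using j by simp
  finally show ?thesis .
qed

lemma path_normal_basis: "k \<in> {1..d} \<Longrightarrow> edge_normal (path_graph b d) (path_points b d) k = b k"
  unfolding edge_normal_def path_points_def by (simp add: sum.atLeastLessThan_Suc)

lemma path_normal_last: "edge_normal (path_graph b d) (path_points b d) (Suc d) = - basis_sum"
proof -
  have "{1..<Suc d} = {1..d}" by auto
  then show ?thesis unfolding edge_normal_def path_points_def basis_sum_def by simp
qed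

lemma path_hyp_basis: "k \<in> {1..d} \<Longrightarrow> hyp (path_graph b d) (path_points b d) k = {P. b k \<bullet> P = 0}"
  unfolding hyp_eq path_edge_offset using path_normal_basis by (simp add: path_offset_def)

lemma path_hyp_last: "hyp (path_graph b d) (path_points b d) (Suc d) = {P. basis_sum \<bullet> P = -1}"
  unfolding hyp_eq path_edge_offset path_normal_last by (auto simp: path_offset_def)

lemma neg_basis_in_path_flat:
  assumes j: "j \<in> {1..d}" "j \<notin> A" and A: "A \<subseteq> {1..d+1}"
  shows "- b j \<in> \<Inter> (hyp (path_graph b d) (path_points b d) ` A)"
proof -
  have "- b j \<in> hyp (path_graph b d) (path_points b d) k" if k: "k \<in> A" for k
  proof (cases "k = d + 1")
    case True then show ?thesis using basis_sum_inner[OF j(1)] by (simp add: path_hyp_last)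
  next
    case False
    then have k1: "k \<in> {1..d}" using k A by auto
    have "k \<noteq> j" using k j by auto
    then show ?thesis using basis_inner[OF k1 j(1)] by (simp add: path_hyp_basis[OF k1])
  qed
  then show ?thesis by blast
qed

lemma zero_in_path_flat:
  assumes "d + 1 \<notin> A" "A \<subseteq> {1..d+1}"
  shows "0 \<in> \<Inter> (hyp (path_graph b d) (path_points b d) ` A)"
proof -
  have "0 \<in> hyp (path_graph b d) (path_points b d) k" if k: "k \<in> A" for k
  proof -
    have "k \<in> {1..d+1}" "k \<noteq> d + 1" using k assms by auto
    then have "k \<in> {1..d}" by auto
    then show ?thesis by (simp add: path_hyp_basis)
  qed
  then show ?thesis by blast
qed

lemma path_flat_all_empty: "\<Inter> (hyp (path_graph b d) (path_points b d) ` {1..d+1}) = {}"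
proof (rule ccontr)
  assume "\<Inter> (hyp (path_graph b d) (path_points b d) ` {1..d+1}) \<noteq> {}"
  then obtain P where P: "P \<in> \<Inter> (hyp (path_graph b d) (path_points b d) ` {1..d+1})" by blast
  have "P \<bullet> u = 0" if u: "u \<in> Basis" for u
  proof -
    have "u \<in> b ` {1..d}" using hb u by (simp add: bij_betw_def)
    then obtain k where k: "k \<in> {1..d}" "u = b k" by blast
    then have "P \<in> hyp (path_graph b d) (path_points b d) k" using P by auto
    then show ?thesis using k by (simp add: path_hyp_basis inner_commute)
  qed
  then have "P = 0" using euclidean_all_zero_iff by blast
  moreover have "P \<in> hyp (path_graph b d) (path_points b d) (d + 1)" using P by auto
  ultimately show False by (simp add: path_hyp_last)
qed

lemma path_flat_nonempty:
  assumes A: "A \<subseteq> {1..d+1}" "A \<noteq> {1..d+1}"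
  shows "\<Inter> (hyp (path_graph b d) (path_points b d) ` A) \<noteq> {}"
proof (cases "d + 1 \<in> A")
  case False then show ?thesis using zero_in_path_flat[OF False A(1)] by blast
next
  case True
  obtain k where k: "k \<in> {1..d+1}" "k \<notin> A" using A by blast
  moreover from k True have "k \<noteq> d + 1" by blast
  ultimately have "k \<in> {1..d}" by auto
  with k(2) show ?thesis using neg_basis_in_path_flat A(1) by blast
qed

lemma path_flat_Eof:
  assumes A: "A \<subseteq> {1..d+1}"
  shows "Eof (path_graph b d) (path_points b d) (\<Inter> (hyp (path_graph b d) (path_points b d) ` A)) = A"
proof (intro set_eqI iffI)
  fix k assume "k \<in> Eof (path_graph b d) (path_points b d) (\<Inter> (hyp (path_graph b d) (path_points b d) ` A))"
  then have k: "k \<in> {1..d+1}"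
      "\<Inter> (hyp (path_graph b d) (path_points b d) ` A) \<subseteq> hyp (path_graph b d) (path_points b d) k"
    unfolding Eof_def by auto
  show "k \<in> A"
  proof (rule ccontr)
    assume kA: "k \<notin> A"
    show False
    proof (cases "k = d + 1")
      case True
      then have "0 \<in> hyp (path_graph b d) (path_points b d) k"
        using zero_in_path_flat[OF _ A] kA k(2) by blast
      with True show False by (simp add: path_hyp_last)
    next
      case False
      then have k1: "k \<in> {1..d}" using k(1) by auto
      then have "- b k \<in> hyp (path_graph b d) (path_points b d) k"
        using neg_basis_in_path_flat[OF k1 kA A] k(2) by blast
      then show False using basis_inner[OF k1 k1] by (simp add: path_hyp_basis[OF k1])
    qed
  qed
qed (use A in \<open>auto simp: Eof_def\<close>)

lemma path_general_position:
  assumes d: "d = DIM('a)"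
  shows "general_position (path_graph b d) (d + 2) (path_points b d)"
  unfolding general_position_iff_image d[symmetric] path_balanced_flats
proof (rule set_eqI, rule iffI)
  fix A assume "A \<in> Eof (path_graph b d) (path_points b d) ` arr_lattice (path_graph b d) (path_points b d)"
  then obtain B where B: "B \<subseteq> {1..d+1}" "\<Inter> (hyp (path_graph b d) (path_points b d) ` B) \<noteq> {}"
    "A = Eof (path_graph b d) (path_points b d) (\<Inter> (hyp (path_graph b d) (path_points b d) ` B))"
    unfolding arr_lattice_def by auto
  have "B \<noteq> {1..d+1}" using B(2) path_flat_all_empty by auto
  then show "A \<in> {A. A \<subseteq> {1..d + 1} \<and> A \<noteq> {1..d + 1}}" using path_flat_Eof[OF B(1)] B(3) B(1) by simp
next
  fix A assume "A \<in> {A. A \<subseteq> {1..d + 1} \<and> A \<noteq> {1..d + 1}}"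
  then have A: "A \<subseteq> {1..d+1}" "A \<noteq> {1..d+1}" by simp_all
  have "\<Inter> (hyp (path_graph b d) (path_points b d) ` A) \<in> arr_lattice (path_graph b d) (path_points b d)"
    unfolding arr_lattice_def using A path_flat_nonempty[OF A] by auto
  then show "A \<in> Eof (path_graph b d) (path_points b d) ` arr_lattice (path_graph b d) (path_points b d)"
    using path_flat_Eof[OF A(1)] by (metis imageI)
qed

end

lemma separable_general_not_ideal:
  "\<exists>(n'::nat) (G'::nat gain_graph) (Q'::nat \<Rightarrow> 'a::euclidean_space).
     gain_graph n' G' \<and> connected_gg n' G' \<and> separable_gg n' G' \<and>
     general_position G' n' Q' \<and> \<not> ideal_general_position n' Q'"
proof -
  obtain b :: "nat \<Rightarrow> 'a" where hb: "bij_betw b {1..card (Basis::'a set)} Basis"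
    using ex_bij_betw_nat_finite_1[OF finite_Basis] by blast
  let ?d = "card (Basis::'a set)"
  have d1: "1 \<le> ?d" using DIM_positive[where 'a='a] by linarith
  show ?thesis
  proof (intro exI conjI)
    show "gain_graph (?d + 2) (path_graph b ?d)" by (rule path_gain_graph)
    show "connected_gg (?d + 2) (path_graph b ?d)" by (rule path_connected)
    show "separable_gg (?d + 2) (path_graph b ?d)" by (rule path_separable[OF d1])
    show "general_position (path_graph b ?d) (?d + 2) (path_points b ?d)" by (rule path_general_position[OF hb refl])
    show "\<not> ideal_general_position (?d + 2) (path_points b ?d)" by (rule path_not_ideal)
  qed
qed

theorem theorem6p3:
  fixes G :: "'e gain_graph" and n :: nat and Q :: "nat \<Rightarrow> 'a::euclidean_space"
  assumes "gain_graph n G"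
  shows "(ideal_general_position n Q \<longrightarrow> simple_position n Q)
    \<and> (general_position G n Q \<longleftrightarrow> proj_general_position G n Q)
    \<and> (completely_general_position G n Q \<longleftrightarrow> proj_completely_general_position G n Q)
    \<and> (complete_gg n G \<longrightarrow> general_position G n Q \<longrightarrow> ideal_general_position n Q)
    \<and> (\<exists>(n'::nat) (G'::nat gain_graph) (Q'::nat \<Rightarrow> 'a).
          gain_graph n' G' \<and> disconnected_gg n' G' \<and>
          general_position G' n' Q' \<and> \<not> ideal_general_position n' Q')
    \<and> (\<exists>(n'::nat) (G'::nat gain_graph) (Q'::nat \<Rightarrow> 'a).
          gain_graph n' G' \<and> connected_gg n' G' \<and> separable_gg n' G' \<and>
          general_position G' n' Q' \<and> \<not> ideal_general_position n' Q')"
proof (intro conjI impI)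
  show "simple_position n Q" if "ideal_general_position n Q"
    using ideal_general_position_imp_simple_position[OF that] .
  show "general_position G n Q \<longleftrightarrow> proj_general_position G n Q"
    by (rule general_position_iff_proj[OF assms])
  then show "completely_general_position G n Q \<longleftrightarrow> proj_completely_general_position G n Q"
    unfolding completely_general_position_def proj_completely_general_position_def by blast
  show "ideal_general_position n Q" if "complete_gg n G" "general_position G n Q"
    using complete_general_position_imp_ideal[OF assms that] .
qed (fact disconnected_general_not_ideal separable_general_not_ideal)+

end
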